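(* Let $1<p<\infty$ and let $w$ be an $A_p$ weight. Then there exist $A_1$ weights $w_1,w_2$ such that $w=w_1w_2^{1-p}$, $[w_1]_{A_1}\le C_p[w]_{A_p}$ and $[w_2]_{A_1}\le C_p[w]_{A_p}^{1/(p-1)}$, where $C_p$ is a constant depending only on $p$.
   Context: Let $(X,\mathcal{F},\mu)$ be a measure space with a filtration $(\mathcal{F}_n)_{n\ge0}$ (nondecreasing sub-$\sigma$-fields) such that $\sigma(\bigcup_n\mathcal{F}_n)=\mathcal{F}$ and $(X,\mathcal{F}_0,\mu)$ is $\sigma$-finite. A weight is a positive function in $L_1(X)+L_\infty(X)$. For $1<p<\infty$, $[w]_{A_p}=\sup_{n\ge0}\|\mathbb{E}(w|\mathcal{F}_n)\mathbb{E}(w^{1/(1-p)}|\mathcal{F}_n)^{p-1}\|_{L_\infty(X)}$, and $[w]_{A_1}=\sup_{n\ge0}\|\mathbb{E}(w|\mathcal{F}_n)/w\|_{L_\infty(X)}$; $w$ is an $A_p$ (resp. $A_1$) weight if the corresponding characteristic is finite. *)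

theory Defs
  imports "HOL-Probability.Probability"
begin

definition mfiltration :: "'a measure \<Rightarrow> (nat \<Rightarrow> 'a measure) \<Rightarrow> bool" where
  "mfiltration M F \<longleftrightarrow>
     (\<forall>n. subalgebra M (F n)) \<and>
     (\<forall>n m. n \<le> m \<longrightarrow> sets (F n) \<subseteq> sets (F m)) \<and>
     sets M = sigma_sets (space M) (\<Union>n. sets (F n)) \<and>
     sigma_finite_subalgebra M (F 0)"

definition ennpow :: "ennreal \<Rightarrow> real \<Rightarrow> ennreal" where
  "ennpow x a = (if x = \<infinity> then \<infinity> else ennreal (enn2real x powr a))"

definition in_L1_plus_Linf :: "'a measure \<Rightarrow> ('a \<Rightarrow> real) \<Rightarrow> bool" where
  "in_L1_plus_Linf M w \<longleftrightarrow>
     (\<exists>g h. integrable M g \<and> h \<in> borel_measurable M \<and>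
            esssup M (\<lambda>x. ennreal \<bar>h x\<bar>) < \<infinity> \<and>
            (AE x in M. w x = g x + h x))"

definition is_weight :: "'a measure \<Rightarrow> ('a \<Rightarrow> real) \<Rightarrow> bool" where
  "is_weight M w \<longleftrightarrow> w \<in> borel_measurable M \<and> (\<forall>x\<in>space M. 0 < w x) \<and> in_L1_plus_Linf M w"

definition Ap_char :: "'a measure \<Rightarrow> (nat \<Rightarrow> 'a measure) \<Rightarrow> real \<Rightarrow> ('a \<Rightarrow> real) \<Rightarrow> ennreal" where
  "Ap_char M F p w = (SUP n. esssup M (\<lambda>x.
      nn_cond_exp M (F n) (\<lambda>y. ennreal (w y)) x *
      ennpow (nn_cond_exp M (F n) (\<lambda>y. ennreal (w y powr (1 / (1 - p)))) x) (p - 1)))"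

definition A1_char :: "'a measure \<Rightarrow> (nat \<Rightarrow> 'a measure) \<Rightarrow> ('a \<Rightarrow> real) \<Rightarrow> ennreal" where
  "A1_char M F w = (SUP n. esssup M (\<lambda>x. nn_cond_exp M (F n) (\<lambda>y. ennreal (w y)) x / ennreal (w x)))"

end

theory Submission
  imports Defs
begin

text \<open>Rubio de Francia's extrapolation algorithm, run along the filtration. Let
  \<open>\<sigma> = w\<^bsup>1/(1-p)\<^esup>\<close> and \<open>M f = sup\<^sub>n E(f|F\<^sub>n)\<close>. The \<open>A\<^sub>p\<close> condition bounds
  \<open>(E\<^sub>n f)\<^bsup>p-1\<^esup>\<close> by \<open>[w]\<^sub>A\<^sub>p\<close> times a \<open>w\<close>-weighted average of a function built from the
  \<open>\<sigma>\<close>-weighted maximal function of \<open>f\<close>; together with Doob's inequality for weighted averages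
  (a stopping time argument and the layer cake formula) this makes \<open>M\<close> bounded on \<open>L\<^sup>p(w)\<close>,
  with \<open>p\<close>-th power of the norm \<open>\<lesssim> [w]\<^sub>A\<^sub>p\<^bsup>p'\<^esup>\<close>, and likewise on \<open>L\<^bsup>p'\<^esup>(\<sigma>)\<close>.

  Hence, for \<open>v\<^sub>1 = w\<^bsup>1/p\<^esup>\<close>, \<open>v\<^sub>2 = w\<^bsup>-1/p\<^esup>\<close>, \<open>c = max 1 (1/(p-1))\<close> and
  \<open>a = c(p-1)\<close>, the sublinear operator
  \<open>S u = (M(v\<^sub>1 u\<^sup>a))\<^bsup>1/a\<^esup> v\<^sub>1\<^bsup>-1/a\<^esup> + (M(v\<^sub>2 u\<^sup>c))\<^bsup>1/c\<^esup> v\<^sub>2\<^bsup>-1/c\<^esup>\<close> is bounded on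
  \<open>L\<^sup>r\<close>, \<open>r = cp\<close>, with some norm \<open>B\<close>. For \<open>U = \<Sum>\<^sub>k (2B)\<^bsup>-k\<^esup> S\<^sup>k u\<^sub>0\<close> we get
  \<open>S U \<le> 2B U\<close>, which says exactly that \<open>W\<^sub>1 = v\<^sub>1 U\<^sup>a\<close> and \<open>W\<^sub>2 = v\<^sub>2 U\<^sup>c\<close> are
  \<open>A\<^sub>1\<close> weights with characteristics \<open>(2B)\<^sup>a \<lesssim> [w]\<^sub>A\<^sub>p\<close> and
  \<open>(2B)\<^sup>c \<lesssim> [w]\<^sub>A\<^sub>p\<^bsup>1/(p-1)\<^esup>\<close>, while \<open>W\<^sub>1 W\<^sub>2\<^bsup>1-p\<^esup> = w\<close>. Multiplying \<open>W\<^sub>1\<close> and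
  \<open>W\<^sub>2\<close> by \<open>\<theta>\<^bsup>p-1\<^esup>\<close> and \<open>\<theta>\<close> for a small positive \<open>F\<^sub>0\<close>-measurable \<open>\<theta>\<close> keeps all
  of this and makes them integrable.\<close>

lemma ennpow_ennreal: "0 \<le> r \<Longrightarrow> ennpow (ennreal r) a = ennreal (r powr a)"
  by (simp add: ennpow_def)

lemma ennpow_top[simp]: "ennpow \<top> a = \<top>"
  by (simp add: ennpow_def)

lemma ennpow_zero[simp]: "ennpow 0 a = 0"
  by (simp add: ennpow_def)

lemma ennpow_one[simp]: "ennpow x 1 = x"
  by (cases x) (auto simp: ennpow_def)

lemma ennpow_eq_top_iff[simp]: "ennpow x a = \<top> \<longleftrightarrow> x = \<top>"
  by (auto simp: ennpow_def)

lemma ennpow_less_top_iff[simp]: "ennpow x a < \<top> \<longleftrightarrow> x < \<top>"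
  using ennpow_eq_top_iff top.not_eq_extremum by blast

lemma ennpow_eq_0_iff[simp]: "ennpow x a = 0 \<longleftrightarrow> x = 0"
  by (cases x) (auto simp: ennpow_def)

lemma borel_measurable_ennpow[measurable]:
  assumes [measurable]: "f \<in> borel_measurable M"
  shows "(\<lambda>x. ennpow (f x) a) \<in> borel_measurable M"
  unfolding ennpow_def by measurable

lemma ennpow_mult: assumes "0 < a" shows "ennpow (x * y) a = ennpow x a * ennpow y a"
proof (cases "x = \<top> \<or> y = \<top>")
  case True
  then show ?thesis
    by (cases "x = 0"; cases "y = 0") (auto simp: ennreal_mult_top ennreal_top_mult)
next
  case False
  then obtain r s where "x = ennreal r" "y = ennreal s" "0 \<le> r" "0 \<le> s"
    by (metis ennreal_cases top.not_eq_extremum)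
  then show ?thesis
    by (simp add: ennpow_ennreal powr_mult ennreal_mult[symmetric])
qed

lemma ennpow_mult_ennreal:
  assumes "0 \<le> c" "0 < e"
  shows "ennpow (x * ennreal c) e = ennpow x e * ennreal (c powr e)"
  using assms by (simp add: ennpow_mult ennpow_ennreal)

lemma ennpow_ennpow: assumes "0 < a" "0 < b" shows "ennpow (ennpow x a) b = ennpow x (a * b)"
proof (cases "x = \<top>")
  case False
  then obtain r where "x = ennreal r" "0 \<le> r" by (metis ennreal_cases)
  then show ?thesis by (simp add: ennpow_ennreal powr_powr)
qed simp

lemma ennpow_inv: assumes "0 < a" shows "ennpow (ennpow x a) (1/a) = x"
  using ennpow_ennpow[of a "1/a" x] assms by simp

lemma ennpow_mono: assumes "0 \<le> a" "x \<le> y" shows "ennpow x a \<le> ennpow y a"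
proof (cases "y = \<top>")
  case False
  then have "x \<noteq> \<top>" using assms top.extremum_unique by blast
  with False obtain r s where "x = ennreal r" "y = ennreal s" "0 \<le> r" "0 \<le> s"
    by (metis ennreal_cases)
  with assms show ?thesis by (auto simp: ennpow_ennreal intro!: ennreal_leI powr_mono2)
qed simp

lemma ennpow_SUP:
  assumes e: "0 < e"
  shows "ennpow (SUP n. a n) e = (SUP n. ennpow (a n) e)"
proof (rule antisym)
  have "(SUP n. a n) \<le> ennpow (SUP n. ennpow (a n) e) (1/e)"
  proof (rule SUP_least)
    fix n
    have "a n = ennpow (ennpow (a n) e) (1/e)" using e by (simp add: ennpow_inv)
    also have "\<dots> \<le> ennpow (SUP n. ennpow (a n) e) (1/e)"
      using e by (intro ennpow_mono SUP_upper) auto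
    finally show "a n \<le> ennpow (SUP n. ennpow (a n) e) (1/e)" .
  qed
  then have "ennpow (SUP n. a n) e \<le> ennpow (ennpow (SUP n. ennpow (a n) e) (1/e)) e"
    using e by (intro ennpow_mono) auto
  also have "\<dots> = (SUP n. ennpow (a n) e)" using e by (simp add: ennpow_ennpow)
  finally show "ennpow (SUP n. a n) e \<le> (SUP n. ennpow (a n) e)" .
next
  show "(SUP n. ennpow (a n) e) \<le> ennpow (SUP n. a n) e"
    using e by (intro SUP_least ennpow_mono SUP_upper) auto
qed

lemma le_one_plus_ennpow: assumes "1 \<le> r" shows "y \<le> 1 + ennpow y r"
proof (cases "y \<le> 1")
  case True then show ?thesis by (metis add_increasing2 zero_le)
next
  case False
  then have "ennpow y 1 \<le> ennpow y r"
  proof (cases "y = \<top>")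
    case False
    then obtain s where s: "y = ennreal s" "0 \<le> s" by (metis ennreal_cases)
    with \<open>\<not> y \<le> 1\<close> have "1 < s" by (metis ennreal_le_1 not_le)
    then have "s powr 1 \<le> s powr r" using assms by (intro powr_mono) auto
    then show ?thesis using s \<open>1 < s\<close> by (simp add: ennpow_ennreal ennreal_leI)
  qed simp
  then show ?thesis by (simp add: add_increasing)
qed

lemma ennpow_add_le: assumes "0 < r"
  shows "ennpow (x + y) r \<le> ennreal (2 powr r) * (ennpow x r + ennpow y r)"
proof -
  have "x + y \<le> 2 * max x y"
    by (metis add_mono max.cobounded1 max.cobounded2 mult_2)
  then have "ennpow (x + y) r \<le> ennpow (2 * max x y) r"
    using assms by (intro ennpow_mono) auto
  also have "\<dots> = ennreal (2 powr r) * ennpow (max x y) r"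
    using assms by (simp add: ennpow_mult ennpow_ennreal[of 2, simplified])
  also have "ennpow (max x y) r \<le> ennpow x r + ennpow y r"
    by (cases "x \<le> y") (auto simp: max_def add_increasing)
  finally show ?thesis by (simp add: mult_left_mono)
qed

lemma young_ennpow:
  assumes r: "1 < r" and mu: "0 < \<mu>"
  shows "ennreal (r * \<mu> powr (r-1)) * z \<le> ennpow z r + ennreal ((r-1) * \<mu> powr r)"
proof (cases "z = \<top>")
  case True then show ?thesis by simp
next
  case False
  then obtain t where t: "z = ennreal t" "0 \<le> t" by (metis ennreal_cases)
  define q where "q = r / (r - 1)"
  have q1: "1 < q" using r by (simp add: q_def)
  have pq: "1/r + 1/q = 1" using r by (simp add: q_def field_simps)
  have "t * \<mu> powr (r-1) \<le> t powr r / r + (\<mu> powr (r-1)) powr q / q"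
    by (rule Youngs_inequality) (use r q1 pq t in auto)
  also have "(\<mu> powr (r-1)) powr q = \<mu> powr r" using r by (simp add: powr_powr q_def)
  finally have "t * \<mu> powr (r-1) \<le> t powr r / r + \<mu> powr r / q" .
  then have "r * (t * \<mu> powr (r-1)) \<le> r * (t powr r / r + \<mu> powr r / q)"
    using r by (intro mult_left_mono) auto
  also have "r * (t powr r / r + \<mu> powr r / q) = t powr r + (r-1) * \<mu> powr r"
    using r by (simp add: q_def field_simps)
  finally have "r * \<mu> powr (r-1) * t \<le> t powr r + (r-1) * \<mu> powr r" by (simp add: mult_ac)
  then show ?thesis using t r
    by (simp add: ennpow_ennreal ennreal_mult[symmetric] ennreal_plus[symmetric] ennreal_leI del: ennreal_plus)
qed

text \<open>Jensen's inequality: the tangent line of \<open>z\<^sup>r\<close> at the barycentre \<open>\<mu>\<close> is Young's inequality.\<close>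

lemma ennpow_suminf_convex_le:
  fixes c :: "nat \<Rightarrow> real" and z :: "nat \<Rightarrow> ennreal"
  assumes r: "1 \<le> r" and c: "\<And>k. 0 \<le> c k" "c sums 1"
  shows "ennpow (\<Sum>k. ennreal (c k) * z k) r \<le> (\<Sum>k. ennreal (c k) * ennpow (z k) r)"
proof (cases "r = 1")
  case True then show ?thesis by simp
next
  case False
  with r have r1: "1 < r" by simp
  have csum: "(\<Sum>k. ennreal (c k)) = 1" using suminf_ennreal_eq[OF c] by simp
  define m where "m = (\<Sum>k. ennreal (c k) * z k)"
  show ?thesis
  proof (cases "m = \<top>")
    case True
    have "m \<le> (\<Sum>k. ennreal (c k) * (1 + ennpow (z k) r))"
      unfolding m_def by (intro suminf_le mult_left_mono le_one_plus_ennpow r) auto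
    also have "\<dots> = (\<Sum>k. ennreal (c k)) + (\<Sum>k. ennreal (c k) * ennpow (z k) r)"
      by (simp add: distrib_left suminf_add[OF summableI summableI])
    also have "\<dots> = 1 + (\<Sum>k. ennreal (c k) * ennpow (z k) r)" by (simp add: csum)
    finally have "(\<Sum>k. ennreal (c k) * ennpow (z k) r) = \<top>"
      using True by (auto simp: top_unique)
    then show ?thesis by simp
  next
    case False
    then obtain \<mu> where mu: "m = ennreal \<mu>" "0 \<le> \<mu>" by (metis ennreal_cases)
    show ?thesis
    proof (cases "\<mu> = 0")
      case True then show ?thesis using mu by (simp add: m_def[symmetric])
    next
      case False
      then have mu0: "0 < \<mu>" using mu by simp
      have "ennreal (r * \<mu> powr (r-1)) * m = (\<Sum>k. ennreal (c k) * (ennreal (r * \<mu> powr (r-1)) * z k))"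
        unfolding m_def by (simp add: ennreal_suminf_cmult[symmetric] mult_ac del: ennreal_suminf_cmult)
      also have "\<dots> \<le> (\<Sum>k. ennreal (c k) * (ennpow (z k) r + ennreal ((r-1) * \<mu> powr r)))"
        by (intro suminf_le mult_left_mono young_ennpow r1 mu0) auto
      also have "\<dots> = (\<Sum>k. ennreal (c k) * ennpow (z k) r) + ennreal ((r-1) * \<mu> powr r)"
        by (simp add: distrib_left suminf_add[OF summableI summableI, symmetric]
            ennreal_suminf_multc csum)
      finally have le: "ennreal (r * \<mu> powr (r-1)) * m
          \<le> (\<Sum>k. ennreal (c k) * ennpow (z k) r) + ennreal ((r-1) * \<mu> powr r)" .
      have "r * \<mu> powr (r-1) * \<mu> = \<mu> powr r + (r-1) * \<mu> powr r"
        using mu0 by (simp add: powr_diff field_simps)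
      then have "ennreal (r * \<mu> powr (r-1)) * m = ennreal (\<mu> powr r) + ennreal ((r-1) * \<mu> powr r)"
        using mu r1 mu0
        by (simp add: ennreal_mult[symmetric] ennreal_plus[symmetric] del: ennreal_plus)
      with le have "ennreal ((r-1) * \<mu> powr r) + ennreal (\<mu> powr r)
          \<le> ennreal ((r-1) * \<mu> powr r) + (\<Sum>k. ennreal (c k) * ennpow (z k) r)"
        by (simp add: add.commute)
      then have "ennreal (\<mu> powr r) \<le> (\<Sum>k. ennreal (c k) * ennpow (z k) r)"
        unfolding ennreal_add_left_cancel_le by simp
      then show ?thesis using mu by (simp add: m_def[symmetric] ennpow_ennreal)
    qed
  qed
qed

lemma ennpow_suminf_le_weighted:
  fixes c :: "nat \<Rightarrow> real" and u :: "nat \<Rightarrow> ennreal"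
  assumes r: "1 \<le> r" and c: "\<And>k. 0 < c k" "c sums 1"
  shows "ennpow (\<Sum>k. u k) r \<le> (\<Sum>k. ennreal (c k powr (1 - r)) * ennpow (u k) r)"
proof -
  have "(\<Sum>k. u k) = (\<Sum>k. ennreal (c k) * (u k * ennreal (1 / c k)))"
  proof (intro suminf_cong)
    fix k
    have "ennreal (c k) * ennreal (1 / c k) = 1"
      using c(1)[of k] by (simp add: ennreal_mult[symmetric] del: ennreal_mult)
    then show "u k = ennreal (c k) * (u k * ennreal (1 / c k))" by (simp add: mult_ac)
  qed
  then have "ennpow (\<Sum>k. u k) r \<le> (\<Sum>k. ennreal (c k) * ennpow (u k * ennreal (1 / c k)) r)"
    using ennpow_suminf_convex_le[OF r _ c(2)] c(1) by (simp add: less_imp_le)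
  also have "\<dots> = (\<Sum>k. ennreal (c k powr (1 - r)) * ennpow (u k) r)"
  proof (intro suminf_cong)
    fix k
    have c0: "0 < c k" by (rule c(1))
    have "c k * (1 / c k) powr r = c k powr 1 * c k powr (- r)"
      using c0 by (simp add: powr_minus_divide powr_divide)
    also have "\<dots> = c k powr (1 - r)" by (simp only: powr_add[symmetric]) simp
    finally have e: "ennreal (c k) * ennreal ((1 / c k) powr r) = ennreal (c k powr (1 - r))"
      using c0 by (simp add: ennreal_mult[symmetric] del: ennreal_mult)
    have "ennreal (c k) * ennpow (u k * ennreal (1 / c k)) r
        = ennpow (u k) r * (ennreal (c k) * ennreal ((1 / c k) powr r))"
      using c0 r by (simp add: ennpow_mult_ennreal mult_ac)
    then show "ennreal (c k) * ennpow (u k * ennreal (1 / c k)) r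
        = ennreal (c k powr (1 - r)) * ennpow (u k) r"
      unfolding e by (simp add: mult.commute)
  qed
  finally show ?thesis .
qed

section \<open>Layer cake representation\<close>

definition int_powr_below :: "real \<Rightarrow> ennreal \<Rightarrow> ennreal" where
  "int_powr_below b y = (\<integral>\<^sup>+t. (if 0 \<le> t \<and> ennreal t < y then ennreal (t powr b) else 0) \<partial>lborel)"

lemma borel_measurable_int_powr_below[measurable]:
  assumes [measurable]: "f \<in> borel_measurable M"
  shows "(\<lambda>x. int_powr_below b (f x)) \<in> borel_measurable M"
  unfolding int_powr_below_def
  by (rule lborel.borel_measurable_nn_integral[of "\<lambda>x t. if 0 \<le> t \<and> ennreal t < f x then ennreal (t powr b) else 0", simplified])
    measurable

lemma nn_integral_powr_atLeastAtMost:
  assumes "b > -1" "c \<ge> 0"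
  shows "(\<integral>\<^sup>+t. ennreal (t powr b) * indicator {0..c} t \<partial>lborel) = ennreal (c powr (b+1) / (b+1))"
proof -
  have "((\<lambda>t. t powr b) has_integral c powr (b+1) / (b+1)) {0..c}"
    by (rule has_integral_powr_from_0) (use assms in auto)
  moreover have eq: "(\<lambda>t. t powr b * indicator {0..c} t) = (\<lambda>t. if t \<in> {0..c} then t powr b else 0)"
    by (auto simp: indicator_def)
  ultimately have "((\<lambda>t. t powr b * indicator {0..c} t) has_integral c powr (b+1) / (b+1)) UNIV"
    unfolding eq has_integral_restrict_UNIV by simp
  then have "integral\<^sup>N lborel (\<lambda>t. t powr b * indicator {0..c} t) = c powr (b+1) / (b+1)"
    by (intro nn_integral_has_integral_lborel) auto
  moreover have "(\<integral>\<^sup>+t. ennreal (t powr b) * indicator {0..c} t \<partial>lborel) =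
      (\<integral>\<^sup>+t. ennreal (t powr b * indicator {0..c} t) \<partial>lborel)"
    by (intro nn_integral_cong) (auto simp: indicator_def)
  ultimately show ?thesis by simp
qed

lemma int_powr_below_ennreal:
  assumes "b > -1" "0 \<le> r"
  shows "int_powr_below b (ennreal r) = ennreal (r powr (b+1) / (b+1))"
proof -
  have "int_powr_below b (ennreal r) = (\<integral>\<^sup>+t. ennreal (t powr b) * indicator {0..r} t \<partial>lborel)"
    unfolding int_powr_below_def
  proof (rule nn_integral_cong_AE)
    have "AE t in lborel. t \<noteq> r" by (rule AE_lborel_singleton)
    then show "AE t in lborel. (if 0 \<le> t \<and> ennreal t < ennreal r then ennreal (t powr b) else 0) =
        ennreal (t powr b) * indicator {0..r} t"
      by eventually_elim (use assms in \<open>auto simp: indicator_def ennreal_less_iff\<close>)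
  qed
  also have "\<dots> = ennreal (r powr (b+1) / (b+1))"
    using assms by (rule nn_integral_powr_atLeastAtMost)
  finally show ?thesis .
qed

lemma int_powr_below_mono: "y \<le> z \<Longrightarrow> int_powr_below b y \<le> int_powr_below b z"
  unfolding int_powr_below_def by (intro nn_integral_mono) (auto intro: order.strict_trans2)

lemma int_powr_below_top:
  assumes "b \<ge> 0"
  shows "int_powr_below b \<top> = \<top>"
proof (rule ccontr)
  assume "int_powr_below b \<top> \<noteq> \<top>"
  then obtain R where R: "int_powr_below b \<top> = ennreal R" "0 \<le> R" by (metis ennreal_cases)
  define r where "r = (R + 1) * (b + 1) + 1"
  have r1: "1 \<le> r" using R assms by (simp add: r_def)
  have "r powr 1 \<le> r powr (b+1)" using r1 assms by (intro powr_mono) auto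
  then have "r / (b+1) \<le> r powr (b+1) / (b+1)" using r1 assms by (simp add: divide_right_mono)
  moreover have "R < r / (b+1)" using assms R by (simp add: r_def field_simps)
  moreover have "int_powr_below b (ennreal r) \<le> int_powr_below b \<top>" by (rule int_powr_below_mono) simp
  ultimately show False using R r1 assms by (simp add: int_powr_below_ennreal)
qed

lemma ennpow_eq_int_powr_below:
  assumes "q \<ge> 1"
  shows "ennpow y q = ennreal q * int_powr_below (q - 1) y"
proof (cases "y = \<top>")
  case True then show ?thesis using assms by (simp add: int_powr_below_top ennreal_mult_top)
next
  case False
  then obtain r where r: "y = ennreal r" "0 \<le> r" by (metis ennreal_cases)
  then show ?thesis
    using assms by (simp add: int_powr_below_ennreal ennpow_ennreal ennreal_mult[symmetric])
qed

lemma (in sigma_finite_measure) nn_integral_layer_cake: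
  assumes [measurable]: "G \<in> borel_measurable M" "\<rho> \<in> borel_measurable M"
  shows "(\<integral>\<^sup>+x. int_powr_below b (G x) * \<rho> x \<partial>M) =
    (\<integral>\<^sup>+t. indicator {0..} t * ennreal (t powr b) *
        (\<integral>\<^sup>+x. indicator {x\<in>space M. ennreal t < G x} x * \<rho> x \<partial>M) \<partial>lborel)"
proof -
  interpret P: pair_sigma_finite M lborel
    by (intro pair_sigma_finite.intro sigma_finite_measure_axioms lborel.sigma_finite_measure_axioms)
  define h where "h = (\<lambda>x t. if 0 \<le> t \<and> ennreal t < G x then ennreal (t powr b) * \<rho> x else 0)"
  have hm: "case_prod h \<in> borel_measurable (M \<Otimes>\<^sub>M lborel)" unfolding h_def by measurable
  have "(\<integral>\<^sup>+x. int_powr_below b (G x) * \<rho> x \<partial>M) = (\<integral>\<^sup>+x. (\<integral>\<^sup>+t. h x t \<partial>lborel) \<partial>M)"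
    unfolding int_powr_below_def h_def
    by (intro nn_integral_cong, subst nn_integral_multc[symmetric]) (auto intro!: nn_integral_cong)
  also have "\<dots> = (\<integral>\<^sup>+t. (\<integral>\<^sup>+x. h x t \<partial>M) \<partial>lborel)"
    using P.Fubini'[OF hm] by simp
  also have "\<dots> = (\<integral>\<^sup>+t. indicator {0..} t * ennreal (t powr b) *
        (\<integral>\<^sup>+x. indicator {x\<in>space M. ennreal t < G x} x * \<rho> x \<partial>M) \<partial>lborel)"
    unfolding h_def
    by (intro nn_integral_cong, subst nn_integral_cmult[symmetric])
      (auto intro!: nn_integral_cong simp: indicator_def)
  finally show ?thesis .
qed

locale filtered_space =
  fixes M :: "'a measure" and F :: "nat \<Rightarrow> 'a measure"
  assumes mfiltration: "mfiltration M F"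
begin

abbreviation E where "E n f \<equiv> nn_cond_exp M (F n) f"

lemma subalgebra_F: "subalgebra M (F n)"
  using mfiltration by (auto simp: mfiltration_def)

lemma sets_F_mono: "n \<le> m \<Longrightarrow> sets (F n) \<subseteq> sets (F m)"
  using mfiltration by (auto simp: mfiltration_def)

lemma space_F[simp]: "space (F n) = space M"
  using subalgebra_F by (auto simp: subalgebra_def)

lemma sigma_finite_subalgebra_F: "sigma_finite_subalgebra M (F n)"
proof -
  interpret S0: sigma_finite_subalgebra M "F 0" using mfiltration by (auto simp: mfiltration_def)
  have "subalgebra (F n) (F 0)" using sets_F_mono[of 0 n] by (auto simp: subalgebra_def)
  then show ?thesis by (rule S0.nested_subalg_is_sigma_finite[OF subalgebra_F])
qed

lemma sigma_finite_measure_M: "sigma_finite_measure M"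
  using sigma_finite_subalgebra_F[of 0] by (rule sigma_finite_subalgebra_is_sigma_finite)

lemma measurable_F_mono: "f \<in> borel_measurable (F k) \<Longrightarrow> k \<le> n \<Longrightarrow> f \<in> borel_measurable (F n)"
  using measurable_from_subalg[of "F n" "F k"] sets_F_mono by (auto simp: subalgebra_def)

lemma measurable_F_M: "f \<in> borel_measurable (F n) \<Longrightarrow> f \<in> borel_measurable M"
  using measurable_from_subalg[OF subalgebra_F] by blast

lemma sets_F_M: "A \<in> sets (F n) \<Longrightarrow> A \<in> sets M"
  using subalgebra_F by (auto simp: subalgebra_def)

lemma borel_measurable_E[measurable]: "E n f \<in> borel_measurable (F n)" "E n f \<in> borel_measurable M"
  by simp_all

lemma E_intg:
  assumes "f \<in> borel_measurable (F n)" "g \<in> borel_measurable M"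
  shows "(\<integral>\<^sup>+ x. f x * E n g x \<partial>M) = (\<integral>\<^sup>+ x. f x * g x \<partial>M)"
proof -
  interpret S: sigma_finite_subalgebra M "F n" by (rule sigma_finite_subalgebra_F)
  show ?thesis using assms by (rule S.nn_cond_exp_intg)
qed

lemma E_prod:
  assumes "f \<in> borel_measurable (F n)" "g \<in> borel_measurable M"
  shows "AE x in M. f x * E n g x = E n (\<lambda>x. f x * g x) x"
proof -
  interpret S: sigma_finite_subalgebra M "F n" by (rule sigma_finite_subalgebra_F)
  show ?thesis using assms by (rule S.nn_cond_exp_prod)
qed

lemma E_sum:
  assumes "f \<in> borel_measurable M" "g \<in> borel_measurable M"
  shows "AE x in M. E n f x + E n g x = E n (\<lambda>x. f x + g x) x"
proof -
  interpret S: sigma_finite_subalgebra M "F n" by (rule sigma_finite_subalgebra_F)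
  show ?thesis using assms by (rule S.nn_cond_exp_sum)
qed

lemma E_cong:
  assumes "AE x in M. f x = g x" "f \<in> borel_measurable M" "g \<in> borel_measurable M"
  shows "AE x in M. E n f x = E n g x"
proof -
  interpret S: sigma_finite_subalgebra M "F n" by (rule sigma_finite_subalgebra_F)
  show ?thesis using assms by (rule S.nn_cond_exp_cong)
qed

lemma E_mono:
  assumes "AE x in M. f x \<le> g x" "f \<in> borel_measurable M" "g \<in> borel_measurable M"
  shows "AE x in M. E n f x \<le> E n g x"
proof -
  interpret S: sigma_finite_subalgebra M "F n" by (rule sigma_finite_subalgebra_F)
  show ?thesis using assms by (rule S.nn_cond_exp_mono)
qed

lemma E_F_meas:
  assumes "f \<in> borel_measurable (F n)"
  shows "AE x in M. f x = E n f x"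
proof -
  interpret S: sigma_finite_subalgebra M "F n" by (rule sigma_finite_subalgebra_F)
  show ?thesis using assms by (rule S.nn_cond_exp_F_meas)
qed

lemma E_cmult:
  assumes "g \<in> borel_measurable M"
  shows "AE x in M. E n (\<lambda>y. c * g y) x = c * E n g x"
  using E_prod[of "\<lambda>_. c" n g] assms by auto

lemma E_pos:
  assumes [measurable]: "g \<in> borel_measurable M" and pos: "\<And>x. x \<in> space M \<Longrightarrow> 0 < g x"
  shows "AE x in M. 0 < E n g x"
proof -
  define A where "A = {x \<in> space (F n). E n g x = 0}"
  have A[measurable]: "A \<in> sets (F n)" unfolding A_def by measurable
  have "(\<integral>\<^sup>+ x. indicator A x * g x \<partial>M) = (\<integral>\<^sup>+ x. indicator A x * E n g x \<partial>M)"
    by (rule E_intg[symmetric]) auto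
  also have "\<dots> = 0"
    by (auto intro!: nn_integral_zero' simp: A_def indicator_def)
  finally have "AE x in M. indicator A x * g x = 0"
    using sets_F_M[OF A] by (subst nn_integral_0_iff_AE[symmetric]) auto
  with AE_space show ?thesis
  proof eventually_elim
    case (elim x)
    then show ?case
      using pos[of x] by (auto simp: A_def indicator_def zero_less_iff_neq_zero split: if_splits)
  qed
qed

lemma E_suminf:
  assumes [measurable]: "\<And>k. f k \<in> borel_measurable M"
  shows "AE x in M. E n (\<lambda>y. \<Sum>k. f k y) x = (\<Sum>k. E n (f k) x)"
proof -
  interpret S: sigma_finite_subalgebra M "F n" by (rule sigma_finite_subalgebra_F)
  have "AE x in M. (\<Sum>k. E n (f k) x) = E n (\<lambda>y. \<Sum>k. f k y) x"
  proof (rule S.nn_cond_exp_charact)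
    fix A assume A[measurable]: "A \<in> sets (F n)"
    then have [measurable]: "A \<in> sets M" by (rule sets_F_M)
    have "(\<integral>\<^sup>+ x \<in> A. (\<Sum>k. f k x) \<partial>M) = (\<Sum>k. \<integral>\<^sup>+ x. indicator A x * f k x \<partial>M)"
      by (subst nn_integral_suminf[symmetric])
        (auto intro!: nn_integral_cong simp: ennreal_suminf_multc mult.commute)
    also have "\<dots> = (\<Sum>k. \<integral>\<^sup>+ x. indicator A x * E n (f k) x \<partial>M)"
      by (rule suminf_cong, rule E_intg[symmetric]) auto
    also have "\<dots> = (\<integral>\<^sup>+ x \<in> A. (\<Sum>k. E n (f k) x) \<partial>M)"
      by (subst nn_integral_suminf[symmetric])
        (auto intro!: nn_integral_cong simp: ennreal_suminf_multc mult.commute)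
    finally show "(\<integral>\<^sup>+ x \<in> A. (\<Sum>k. f k x) \<partial>M) = (\<integral>\<^sup>+ x \<in> A. (\<Sum>k. E n (f k) x) \<partial>M)" .
  qed measurable
  then show ?thesis by (auto elim: AE_mp)
qed

lemma E_mult_F_meas_le:
  assumes [measurable]: "t \<in> borel_measurable (F n)" "W \<in> borel_measurable M"
    and t: "\<And>x. 0 \<le> t x" and W: "\<And>x. x \<in> space M \<Longrightarrow> 0 < W x"
    and bd: "AE x in M. E n (\<lambda>y. ennreal (W y)) x \<le> ennreal K * ennreal (W x)" and K: "0 \<le> K"
  shows "AE x in M. E n (\<lambda>y. ennreal (t y * W y)) x \<le> ennreal K * ennreal (t x * W x)"
proof -
  have [measurable]: "t \<in> borel_measurable M" by (rule measurable_F_M[of _ n]) simp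
  have "AE x in M. ennreal (t x) * E n (\<lambda>y. ennreal (W y)) x = E n (\<lambda>y. ennreal (t y) * ennreal (W y)) x"
    by (rule E_prod) measurable
  moreover have "AE x in M. E n (\<lambda>y. ennreal (t y) * ennreal (W y)) x = E n (\<lambda>y. ennreal (t y * W y)) x"
    by (rule E_cong) (use t W in \<open>auto intro!: AE_I2 simp: ennreal_mult less_imp_le\<close>)
  ultimately show ?thesis using bd AE_space
  proof eventually_elim
    case (elim x)
    have "E n (\<lambda>y. ennreal (t y * W y)) x = ennreal (t x) * E n (\<lambda>y. ennreal (W y)) x"
      using elim by simp
    also have "\<dots> \<le> ennreal (t x) * (ennreal K * ennreal (W x))"
      using elim by (intro mult_left_mono) auto
    also have "\<dots> = ennreal K * ennreal (t x * W x)"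
      using t[of x] W[of x] elim by (simp add: ennreal_mult less_imp_le mult_ac)
    finally show ?case .
  qed
qed

end

section \<open>Doob's maximal inequality for weighted averages\<close>

lemma ennreal_half_mult_le_of_less_divide:
  fixes a a1 b :: ennreal
  assumes "ennreal l < a / b" "a \<le> a1 + ennreal (l/2) * b" "0 < l"
  shows "ennreal (l/2) * b \<le> a1"
proof (cases "b = \<top> \<or> b = 0")
  case True then show ?thesis using assms(1) by (auto simp: ennreal_divide_top)
next
  case False
  then have "b / b = 1" by (simp add: ennreal_divide_self top.not_eq_extremum)
  then have "(a / b) * b = a" by (metis ennreal_times_divide mult.commute mult_1_right)
  moreover have "ennreal l * b < (a / b) * b"
    using assms(1) False
    by (intro ennreal_mult_strict_right_mono) (auto simp: top.not_eq_extremum zero_less_iff_neq_zero)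
  moreover have "ennreal l * b = ennreal (l/2) * b + ennreal (l/2) * b"
    using assms(3) by (simp add: distrib_right[symmetric] ennreal_plus[symmetric] del: ennreal_plus)
  ultimately have lt: "ennreal (l/2) * b + ennreal (l/2) * b < a"
    by simp
  show ?thesis
  proof (rule ccontr)
    assume "\<not> ?thesis"
    then have "a1 + ennreal (l/2) * b \<le> ennreal (l/2) * b + ennreal (l/2) * b"
      by (intro add_right_mono) simp
    with lt assms(2) show False by (meson leD order_trans)
  qed
qed

lemma ennreal_half_less_iff: "0 \<le> t \<Longrightarrow> ennreal (t/2) < y \<longleftrightarrow> ennreal t < 2 * y"
proof (cases "y = \<top>")
  case True then show ?thesis by (simp add: ennreal_mult_top)
next
  case False
  then obtain s where s: "y = ennreal s" "0 \<le> s" by (metis ennreal_cases)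
  assume t: "0 \<le> t"
  have "ennreal (t/2) < y \<longleftrightarrow> t/2 < s" unfolding s(1) using t by (intro ennreal_less_iff) simp
  moreover have "2 * y = ennreal (2 * s)" using s by (simp add: ennreal_mult)
  then have "ennreal t < 2 * y \<longleftrightarrow> t < 2 * s" using t by (simp add: ennreal_less_iff)
  ultimately show ?thesis by auto
qed

definition doob_const :: "real \<Rightarrow> real" where
  "doob_const q = 2 powr q * q / (q - 1)"

lemma doob_const_pos: "1 < q \<Longrightarrow> 0 < doob_const q"
  by (simp add: doob_const_def)

lemma int_powr_below_double_mult_le:
  assumes q: "1 < q"
  shows "ennreal (2 * q) * (int_powr_below (q - 2) (2 * y) * y) \<le> ennreal (doob_const q) * ennpow y q"
proof (cases "y = \<top>")
  case True
  have "0 < doob_const q" using q by (simp add: doob_const_def)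
  then have "ennreal (doob_const q) * ennpow y q = \<top>"
    using True q by (simp add: ennreal_mult_top)
  then show ?thesis by simp
next
  case False
  then obtain r where r: "y = ennreal r" "0 \<le> r" by (metis ennreal_cases)
  define X where "X = (2 * r) powr (q - 1) / (q - 1)"
  have X: "0 \<le> X" using q by (simp add: X_def)
  have y2: "2 * ennreal r = ennreal (2 * r)" using r by (simp add: ennreal_mult)
  have "ennreal (2 * q) * (int_powr_below (q - 2) (2 * y) * y) = ennreal (2 * q) * (ennreal X * ennreal r)"
    using q r unfolding r(1) y2 by (simp add: int_powr_below_ennreal X_def)
  also have "\<dots> = ennreal (2 * q * (X * r))"
    using q r X by (simp add: ennreal_mult)
  also have "2 * q * (X * r) = doob_const q * r powr q"
  proof (cases "r = 0")
    case False
    then have e1: "r * r powr (q - 1) = r powr q" using r by (simp add: powr_diff)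
    have e2: "2 * 2 powr (q - 1) = (2::real) powr q" by (simp add: powr_diff)
    have "2 * q * ((2 * r) powr (q - 1) / (q - 1) * r)
        = q / (q - 1) * ((2 * 2 powr (q - 1)) * (r * r powr (q - 1)))"
      using r by (simp add: powr_mult field_simps)
    then show ?thesis unfolding X_def e1 e2 doob_const_def by (simp add: field_simps)
  qed (simp add: X_def)
  also have "ennreal (doob_const q * r powr q) = ennreal (doob_const q) * ennpow y q"
    by (subst ennreal_mult) (use q r doob_const_pos[OF q] in \<open>auto simp: ennpow_ennreal\<close>)
  finally show ?thesis by simp
qed

context filtered_space
begin

definition doob_max :: "('a \<Rightarrow> ennreal) \<Rightarrow> 'a \<Rightarrow> ennreal" where
  "doob_max f x = (SUP n. E n f x)"

definition weighted_doob_max :: "('a \<Rightarrow> real) \<Rightarrow> ('a \<Rightarrow> ennreal) \<Rightarrow> 'a \<Rightarrow> ennreal" where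
  "weighted_doob_max v g x = (SUP n. E n (\<lambda>y. g y * ennreal (v y)) x / E n (\<lambda>y. ennreal (v y)) x)"

lemma borel_measurable_doob_max[measurable]: "doob_max f \<in> borel_measurable M"
  unfolding doob_max_def by measurable

lemma borel_measurable_weighted_doob_max[measurable]: "weighted_doob_max v g \<in> borel_measurable M"
  unfolding weighted_doob_max_def by measurable

lemma E_le_truncation:
  assumes [measurable]: "v \<in> borel_measurable M" "g \<in> borel_measurable M"
  shows "AE x in M. E n (\<lambda>y. g y * ennreal (v y)) x \<le>
    E n (\<lambda>y. indicator {y\<in>space M. s < g y} y * g y * ennreal (v y)) x + s * E n (\<lambda>y. ennreal (v y)) x"
proof -
  have "AE x in M. E n (\<lambda>y. g y * ennreal (v y)) x \<le>
      E n (\<lambda>y. indicator {y\<in>space M. s < g y} y * g y * ennreal (v y) + s * ennreal (v y)) x"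
  proof (rule E_mono)
    show "AE x in M. g x * ennreal (v x) \<le>
        indicator {y\<in>space M. s < g y} x * g x * ennreal (v x) + s * ennreal (v x)"
    proof (rule AE_I2)
      fix x assume x: "x \<in> space M"
      show "g x * ennreal (v x) \<le>
          indicator {y\<in>space M. s < g y} x * g x * ennreal (v x) + s * ennreal (v x)"
      proof (cases "s < g x")
        case True then show ?thesis using x by (simp add: add_increasing2)
      next
        case False then show ?thesis by (simp add: not_less mult_right_mono add_increasing)
      qed
    qed
  qed measurable
  moreover have "AE x in M. E n (\<lambda>y. indicator {y\<in>space M. s < g y} y * g y * ennreal (v y)) x
        + E n (\<lambda>y. s * ennreal (v y)) x
      = E n (\<lambda>y. indicator {y\<in>space M. s < g y} y * g y * ennreal (v y) + s * ennreal (v y)) x"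
    by (rule E_sum) measurable
  moreover have "AE x in M. E n (\<lambda>y. s * ennreal (v y)) x = s * E n (\<lambda>y. ennreal (v y)) x"
    by (rule E_cmult) measurable
  ultimately show ?thesis by eventually_elim simp
qed

text \<open>On an \<open>F n\<close>-set where the weighted average of \<open>g\<close> exceeds \<open>l\<close>, the part of \<open>g\<close>
  below \<open>l/2\<close> contributes at most half of that average.\<close>

lemma weighted_level_set_le:
  assumes [measurable]: "v \<in> borel_measurable M" "g \<in> borel_measurable M" "B \<in> sets (F n)"
    and B: "\<And>x. x \<in> B \<Longrightarrow> ennreal l < E n (\<lambda>y. g y * ennreal (v y)) x / E n (\<lambda>y. ennreal (v y)) x"
    and l: "0 < l"
  shows "ennreal (l/2) * (\<integral>\<^sup>+x. indicator B x * ennreal (v x) \<partial>M)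
    \<le> (\<integral>\<^sup>+x. indicator B x * (indicator {y\<in>space M. ennreal (l/2) < g y} x * g x * ennreal (v x)) \<partial>M)"
proof -
  let ?g1 = "\<lambda>y. indicator {y\<in>space M. ennreal (l/2) < g y} y * g y * ennreal (v y)"
  have [measurable]: "B \<in> sets M" using assms(3) by (rule sets_F_M)
  have "ennreal (l/2) * (\<integral>\<^sup>+x. indicator B x * ennreal (v x) \<partial>M)
      = ennreal (l/2) * (\<integral>\<^sup>+x. indicator B x * E n (\<lambda>y. ennreal (v y)) x \<partial>M)"
    by (subst E_intg) auto
  also have "\<dots> = (\<integral>\<^sup>+x. indicator B x * (ennreal (l/2) * E n (\<lambda>y. ennreal (v y)) x) \<partial>M)"
    by (subst nn_integral_cmult[symmetric]) (auto intro!: nn_integral_cong simp: ac_simps)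
  also have "\<dots> \<le> (\<integral>\<^sup>+x. indicator B x * E n ?g1 x \<partial>M)"
  proof (rule nn_integral_mono_AE)
    show "AE x in M. indicator B x * (ennreal (l/2) * E n (\<lambda>y. ennreal (v y)) x)
        \<le> indicator B x * E n ?g1 x"
      using E_le_truncation[OF assms(1,2), of n "ennreal (l/2)"]
    proof eventually_elim
      case (elim x)
      show ?case
      proof (cases "x \<in> B")
        case True
        then have "ennreal (l/2) * E n (\<lambda>y. ennreal (v y)) x \<le> E n ?g1 x"
          by (rule ennreal_half_mult_le_of_less_divide[OF B elim l])
        then show ?thesis using True by simp
      qed simp
    qed
  qed
  also have "\<dots> = (\<integral>\<^sup>+x. indicator B x * ?g1 x \<partial>M)"
    by (rule E_intg) auto
  finally show ?thesis .
qed

definition first_exceed :: "(nat \<Rightarrow> 'a \<Rightarrow> ennreal) \<Rightarrow> ennreal \<Rightarrow> nat \<Rightarrow> 'a set" where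
  "first_exceed G l n = {x\<in>space M. l < G n x \<and> (\<forall>k<n. G k x \<le> l)}"

lemma first_exceed_in_F:
  assumes G: "\<And>k. G k \<in> borel_measurable (F k)"
  shows "first_exceed G l n \<in> sets (F n)"
proof -
  have G_F: "G k \<in> borel_measurable (F n)" if "k \<le> n" for k
    using measurable_F_mono[OF G that] .
  have "first_exceed G l n = {x\<in>space (F n). l < G n x}
      \<inter> (\<Inter>k\<in>{..n}. {x\<in>space (F n). k < n \<longrightarrow> G k x \<le> l}) \<inter> space (F n)"
    by (auto simp: first_exceed_def)
  also have "\<dots> \<in> sets (F n)"
  proof (intro sets.Int sets.finite_INT sets.top)
    show "{x\<in>space (F n). l < G n x} \<in> sets (F n)"
      using G_F[of n] by measurable
    fix k assume "k \<in> {..n}"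
    then have [measurable]: "G k \<in> borel_measurable (F n)" by (intro G_F) auto
    show "{x\<in>space (F n). k < n \<longrightarrow> G k x \<le> l} \<in> sets (F n)" by measurable
  qed auto
  finally show ?thesis .
qed

lemma disjoint_family_first_exceed: "disjoint_family (first_exceed G l)"
  unfolding disjoint_family_on_def first_exceed_def by (auto, metis linorder_neqE_nat not_le)

lemma UN_first_exceed: "(\<Union>n. first_exceed G l n) = {x\<in>space M. l < (SUP n. G n x)}"
proof safe
  fix x assume x: "x \<in> space M" "l < (SUP n. G n x)"
  then obtain n where "l < G n x" by (auto simp: less_SUP_iff)
  define m where "m = (LEAST m. l < G m x)"
  have "l < G m x" unfolding m_def by (rule LeastI) fact
  moreover have "\<forall>k<m. G k x \<le> l" unfolding m_def using not_less_Least not_le by blast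
  ultimately show "x \<in> (\<Union>n. first_exceed G l n)" using x by (auto simp: first_exceed_def)
qed (auto simp: first_exceed_def less_SUP_iff)

lemma weighted_doob_max_weak_type:
  assumes [measurable]: "v \<in> borel_measurable M" "g \<in> borel_measurable M" and l: "0 < l"
  shows "ennreal (l/2) * (\<integral>\<^sup>+x. indicator {x\<in>space M. ennreal l < weighted_doob_max v g x} x * ennreal (v x) \<partial>M)
      \<le> (\<integral>\<^sup>+x. indicator {x\<in>space M. ennreal (l/2) < g x} x * g x * ennreal (v x) \<partial>M)"
proof -
  define G where "G = (\<lambda>n x. E n (\<lambda>y. g y * ennreal (v y)) x / E n (\<lambda>y. ennreal (v y)) x)"
  have "G k \<in> borel_measurable (F k)" for k unfolding G_def by measurable
  then have A_F: "first_exceed G (ennreal l) n \<in> sets (F n)" for n by (rule first_exceed_in_F)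
  let ?A = "first_exceed G (ennreal l)"
  have [measurable]: "?A n \<in> sets M" for n using A_F by (rule sets_F_M)
  note disj = disjoint_family_first_exceed[of G "ennreal l"]
  have UA: "(\<Union>n. ?A n) = {x\<in>space M. ennreal l < weighted_doob_max v g x}"
    by (simp add: UN_first_exceed weighted_doob_max_def G_def)
  let ?g1 = "\<lambda>x. indicator {y\<in>space M. ennreal (l/2) < g y} x * g x * ennreal (v x)"
  have "ennreal (l/2) * (\<integral>\<^sup>+x. indicator {x\<in>space M. ennreal l < weighted_doob_max v g x} x * ennreal (v x) \<partial>M)
      = ennreal (l/2) * (\<integral>\<^sup>+x. (\<Sum>n. indicator (?A n) x * ennreal (v x)) \<partial>M)"
    by (simp add: UA[symmetric] suminf_indicator[OF disj, symmetric] ennreal_suminf_multc)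
  also have "\<dots> = (\<Sum>n. ennreal (l/2) * (\<integral>\<^sup>+x. indicator (?A n) x * ennreal (v x) \<partial>M))"
    by (subst nn_integral_suminf) (auto simp: ennreal_suminf_cmult)
  also have "\<dots> \<le> (\<Sum>n. (\<integral>\<^sup>+x. indicator (?A n) x * ?g1 x \<partial>M))"
  proof (intro suminf_le)
    fix n
    show "ennreal (l/2) * (\<integral>\<^sup>+x. indicator (?A n) x * ennreal (v x) \<partial>M) \<le> (\<integral>\<^sup>+x. indicator (?A n) x * ?g1 x \<partial>M)"
      by (rule weighted_level_set_le[OF assms(1,2) A_F _ l]) (simp add: first_exceed_def G_def)
  qed auto
  also have "\<dots> = (\<integral>\<^sup>+x. (\<Sum>n. indicator (?A n) x * ?g1 x) \<partial>M)"
    by (subst nn_integral_suminf) auto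
  also have "\<dots> = (\<integral>\<^sup>+x. indicator (\<Union>n. ?A n) x * ?g1 x \<partial>M)"
    by (simp add: suminf_indicator[OF disj, symmetric] ennreal_suminf_multc)
  also have "\<dots> \<le> (\<integral>\<^sup>+x. ?g1 x \<partial>M)"
    by (intro nn_integral_mono) (auto simp: indicator_def)
  finally show ?thesis .
qed

lemma weighted_doob_max_layer_le:
  assumes [measurable]: "v \<in> borel_measurable M" "g \<in> borel_measurable M"
  shows "indicator {0..} t * ennreal (t powr (q - 1)) *
        (\<integral>\<^sup>+x. indicator {x\<in>space M. ennreal t < weighted_doob_max v g x} x * ennreal (v x) \<partial>M)
      \<le> indicator {0..} t * ennreal (t powr (q - 2)) *
        (\<integral>\<^sup>+x. indicator {x\<in>space M. ennreal t < 2 * g x} x * (2 * (g x * ennreal (v x))) \<partial>M)"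
proof (cases "0 < t")
  case t: True
  have "ennreal (t/2) * (\<integral>\<^sup>+x. indicator {x\<in>space M. ennreal t < weighted_doob_max v g x} x * ennreal (v x) \<partial>M)
      \<le> (\<integral>\<^sup>+x. indicator {x\<in>space M. ennreal t < 2 * g x} x * (g x * ennreal (v x)) \<partial>M)"
    using weighted_doob_max_weak_type[of v g t] t
    by (simp add: ennreal_half_less_iff mult.assoc)
  then have w: "2 * (ennreal (t/2) *
      (\<integral>\<^sup>+x. indicator {x\<in>space M. ennreal t < weighted_doob_max v g x} x * ennreal (v x) \<partial>M))
    \<le> (\<integral>\<^sup>+x. indicator {x\<in>space M. ennreal t < 2 * g x} x * (2 * (g x * ennreal (v x))) \<partial>M)"
    by (subst mult.left_commute, subst nn_integral_cmult) (auto intro: mult_left_mono)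
  have r: "t powr (q - 1) = t powr (q - 2) * 2 * (t / 2)"
    using t by (simp add: powr_diff power2_eq_square)
  have "ennreal (t powr (q - 2) * 2 * (t / 2)) = ennreal (t powr (q - 2) * 2) * ennreal (t / 2)"
    using t by (intro ennreal_mult) auto
  also have "ennreal (t powr (q - 2) * 2) = ennreal (t powr (q - 2)) * 2"
    by (simp add: ennreal_mult')
  finally have e: "ennreal (t powr (q - 1)) = ennreal (t powr (q - 2)) * 2 * ennreal (t / 2)"
    unfolding r .
  show ?thesis
    using t mult_left_mono[OF w, of "ennreal (t powr (q - 2))"] by (simp add: e mult.assoc)
next
  case False
  then have "t powr (q - 1) = 0 \<or> t < 0" by (cases "t = 0") auto
  then show ?thesis by (auto simp: indicator_def)
qed

lemma weighted_doob_max_nn_integral_le: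
  assumes [measurable]: "v \<in> borel_measurable M" "g \<in> borel_measurable M"
    and v: "\<And>x. x \<in> space M \<Longrightarrow> 0 < v x" and q: "1 < q"
  shows "(\<integral>\<^sup>+x. ennpow (weighted_doob_max v g x) q * ennreal (v x) \<partial>M)
     \<le> ennreal (doob_const q) * (\<integral>\<^sup>+x. ennpow (g x) q * ennreal (v x) \<partial>M)"
proof -
  interpret sigma_finite_measure M by (rule sigma_finite_measure_M)
  let ?G = "weighted_doob_max v g"
  let ?gv = "\<lambda>x. 2 * (g x * ennreal (v x))"
  have "(\<integral>\<^sup>+x. int_powr_below (q - 1) (?G x) * ennreal (v x) \<partial>M)
      = (\<integral>\<^sup>+t. indicator {0..} t * ennreal (t powr (q - 1)) *
          (\<integral>\<^sup>+x. indicator {x\<in>space M. ennreal t < ?G x} x * ennreal (v x) \<partial>M) \<partial>lborel)"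
    by (rule nn_integral_layer_cake) measurable
  also have "\<dots> \<le> (\<integral>\<^sup>+t. indicator {0..} t * ennreal (t powr (q - 2)) *
          (\<integral>\<^sup>+x. indicator {x\<in>space M. ennreal t < 2 * g x} x * ?gv x \<partial>M) \<partial>lborel)"
    by (intro nn_integral_mono weighted_doob_max_layer_le assms(1,2))
  also have "\<dots> = (\<integral>\<^sup>+x. int_powr_below (q - 2) (2 * g x) * ?gv x \<partial>M)"
    by (rule nn_integral_layer_cake[symmetric]) measurable
  finally have layers: "(\<integral>\<^sup>+x. int_powr_below (q - 1) (?G x) * ennreal (v x) \<partial>M)
      \<le> (\<integral>\<^sup>+x. int_powr_below (q - 2) (2 * g x) * ?gv x \<partial>M)" .
  have "(\<integral>\<^sup>+x. ennpow (?G x) q * ennreal (v x) \<partial>M)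
      = ennreal q * (\<integral>\<^sup>+x. int_powr_below (q - 1) (?G x) * ennreal (v x) \<partial>M)"
    using q by (simp add: ennpow_eq_int_powr_below mult.assoc nn_integral_cmult)
  also have "\<dots> \<le> ennreal q * (\<integral>\<^sup>+x. int_powr_below (q - 2) (2 * g x) * ?gv x \<partial>M)"
    by (rule mult_left_mono[OF layers]) simp
  also have "\<dots> = (\<integral>\<^sup>+x. ennreal (2 * q) * (int_powr_below (q - 2) (2 * g x) * g x) * ennreal (v x) \<partial>M)"
    using q by (subst nn_integral_cmult[symmetric]) (auto intro!: nn_integral_cong simp: ennreal_mult mult_ac)
  also have "\<dots> \<le> (\<integral>\<^sup>+x. ennreal (doob_const q) * ennpow (g x) q * ennreal (v x) \<partial>M)"
    by (intro nn_integral_mono mult_right_mono int_powr_below_double_mult_le q) simp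
  also have "\<dots> = ennreal (doob_const q) * (\<integral>\<^sup>+x. ennpow (g x) q * ennreal (v x) \<partial>M)"
    by (simp add: nn_integral_cmult mult.assoc)
  finally show ?thesis by (simp add: mult_left_mono)
qed

end

section \<open>Doob's maximal operator on \<open>A\<^sub>p\<close>-weighted spaces\<close>

lemma ennpow_mult_inverse_weight:
  assumes s: "0 < s" and a: "0 < a"
  shows "ennpow (X * ennreal (1 / s)) a * ennreal s = ennpow X a * ennreal (s powr (1 - a))"
proof -
  have "(1 / s) powr a * s = s powr (- a) * s powr 1" using s by (simp add: powr_minus_divide powr_divide)
  also have "\<dots> = s powr (1 - a)" by (simp only: powr_add[symmetric]) simp
  finally show ?thesis
    using s a by (simp add: ennpow_mult_ennreal mult.assoc ennreal_mult[symmetric] del: ennreal_mult)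
qed

lemma ennpow_le_of_Ap_bound:
  fixes a s e X :: ennreal
  assumes p: "1 < p" and a: "0 < a" "a < \<top>" and s: "0 < s" "s < \<top>"
    and Ap: "a * ennpow s (p-1) \<le> ennreal A" and X: "ennpow (e / s) (p-1) \<le> X"
  shows "ennpow e (p-1) \<le> ennreal A * (X / a)"
proof -
  have "s / s = 1" using s by (intro ennreal_divide_self) auto
  then have "e = s * (e / s)" by (metis ennreal_times_divide mult.commute mult_1_right)
  then have "ennpow e (p-1) = ennpow s (p-1) * ennpow (e / s) (p-1)"
    using p by (metis diff_gt_0_iff_gt ennpow_mult)
  also have "\<dots> \<le> ennpow s (p-1) * X"
    using X by (rule mult_left_mono) simp
  also have "\<dots> = (a * ennpow s (p-1)) * (X / a)"
  proof -
    have "a / a = 1" using a by (intro ennreal_divide_self) auto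
    then have eq: "a * (X / a) = X" by (metis ennreal_times_divide mult.commute mult_1_right)
    have "ennpow s (p-1) * X = ennpow s (p-1) * (a * (X / a))" by (simp only: eq)
    also have "\<dots> = (a * ennpow s (p-1)) * (X / a)" by (simp only: mult_ac)
    finally show ?thesis .
  qed
  also have "\<dots> \<le> ennreal A * (X / a)"
    using Ap by (rule mult_right_mono) simp
  finally show ?thesis .
qed

context filtered_space
begin

lemma AE_E_pos_finite_of_bounded_product:
  assumes [measurable]: "u \<in> borel_measurable M" "s \<in> borel_measurable M"
    and u: "\<And>x. x \<in> space M \<Longrightarrow> 0 < u x" and s: "\<And>x. x \<in> space M \<Longrightarrow> 0 < s x"
    and bd: "AE x in M. E n (\<lambda>y. ennreal (u y)) x * ennpow (E n (\<lambda>y. ennreal (s y)) x) e \<le> ennreal A"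
  shows "AE x in M. 0 < E n (\<lambda>y. ennreal (u y)) x \<and> E n (\<lambda>y. ennreal (u y)) x < \<top> \<and>
    0 < E n (\<lambda>y. ennreal (s y)) x \<and> E n (\<lambda>y. ennreal (s y)) x < \<top>"
proof -
  have "AE x in M. 0 < E n (\<lambda>y. ennreal (u y)) x" by (rule E_pos) (use u in auto)
  moreover have "AE x in M. 0 < E n (\<lambda>y. ennreal (s y)) x" by (rule E_pos) (use s in auto)
  ultimately show ?thesis using bd
  proof eventually_elim
    case (elim x)
    have "E n (\<lambda>y. ennreal (s y)) x \<noteq> \<top>"
    proof
      assume "E n (\<lambda>y. ennreal (s y)) x = \<top>"
      with elim show False by (simp add: ennreal_mult_top top_unique split: if_splits)
    qed
    moreover have "E n (\<lambda>y. ennreal (u y)) x \<noteq> \<top>"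
    proof
      assume "E n (\<lambda>y. ennreal (u y)) x = \<top>"
      with elim show False by (simp add: ennreal_top_mult top_unique split: if_splits)
    qed
    ultimately show ?case using elim by (simp add: top.not_eq_extremum)
  qed
qed

text \<open>With \<open>\<sigma> = w\<^bsup>1/(1-p)\<^esup>\<close>, write
  \<open>E\<^sub>n f = E\<^sub>n \<sigma> \<cdot> (E\<^sub>n f / E\<^sub>n \<sigma>)\<close>, dominate the second factor by the \<open>\<sigma>\<close>-weighted maximal
  function \<open>H\<close>, and trade \<open>(E\<^sub>n \<sigma>)\<^bsup>p-1\<^esup>\<close> for \<open>A / E\<^sub>n w\<close>.\<close>

lemma E_ennpow_le_Ap_weighted_doob_max:
  fixes w :: "'a \<Rightarrow> real" and f :: "'a \<Rightarrow> ennreal"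
  assumes [measurable]: "w \<in> borel_measurable M" "f \<in> borel_measurable M"
    and w: "\<And>x. x \<in> space M \<Longrightarrow> 0 < w x" and p: "1 < p"
    and Ap: "AE x in M. E n (\<lambda>y. ennreal (w y)) x *
      ennpow (E n (\<lambda>y. ennreal (w y powr (1/(1-p))))  x) (p-1) \<le> ennreal A"
  defines "H \<equiv> \<lambda>x. SUP k. E k f x / E k (\<lambda>y. ennreal (w y powr (1/(1-p)))) x"
  shows "AE x in M. ennpow (E n f x) (p - 1)
    \<le> ennreal A * weighted_doob_max w (\<lambda>y. ennpow (H y) (p - 1) * ennreal (1 / w y)) x"
proof -
  have \<sigma>: "(\<lambda>y. w y powr (1/(1-p))) \<in> borel_measurable M"
    "\<And>x. x \<in> space M \<Longrightarrow> 0 < w x powr (1/(1-p))"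
    using w by (auto simp: less_imp_neq[symmetric])
  define g where "g = (\<lambda>y. ennpow (H y) (p - 1) * ennreal (1 / w y))"
  have [measurable]: "H \<in> borel_measurable M" unfolding H_def by measurable
  have [measurable]: "g \<in> borel_measurable M" unfolding g_def by measurable
  define h where "h = (\<lambda>x. E n f x / E n (\<lambda>y. ennreal (w y powr (1/(1-p)))) x)"
  have [measurable]: "h \<in> borel_measurable (F n)" unfolding h_def by measurable
  then have [measurable]: "h \<in> borel_measurable M" by (rule measurable_F_M)
  have "AE x in M. ennpow (h x) (p-1) = E n (\<lambda>y. ennpow (h y) (p-1)) x"
    by (rule E_F_meas) measurable
  moreover have "AE x in M. E n (\<lambda>y. ennpow (h y) (p-1)) x \<le> E n (\<lambda>y. ennpow (H y) (p-1)) x"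
  proof (rule E_mono)
    show "AE x in M. ennpow (h x) (p-1) \<le> ennpow (H x) (p-1)"
      using p by (intro AE_I2 ennpow_mono) (auto simp: h_def H_def intro: SUP_upper)
  qed measurable
  moreover have "AE x in M. E n (\<lambda>y. ennpow (H y) (p-1)) x = E n (\<lambda>y. g y * ennreal (w y)) x"
  proof (rule E_cong)
    show "AE x in M. ennpow (H x) (p-1) = g x * ennreal (w x)"
    proof (rule AE_I2)
      fix x assume x: "x \<in> space M"
      have "ennreal (1 / w x) * ennreal (w x) = 1"
        using w[OF x] by (simp add: ennreal_mult[symmetric] del: ennreal_mult)
      then show "ennpow (H x) (p-1) = g x * ennreal (w x)" by (simp add: g_def mult.assoc)
    qed
  qed measurable
  moreover have "AE x in M. 0 < E n (\<lambda>y. ennreal (w y)) x \<and> E n (\<lambda>y. ennreal (w y)) x < \<top> \<and>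
      0 < E n (\<lambda>y. ennreal (w y powr (1/(1-p)))) x \<and> E n (\<lambda>y. ennreal (w y powr (1/(1-p)))) x < \<top>"
    by (rule AE_E_pos_finite_of_bounded_product[OF assms(1) \<sigma>(1) w \<sigma>(2) Ap])
  ultimately show ?thesis using Ap
  proof eventually_elim
    case (elim x)
    have "ennpow (E n f x) (p-1) \<le> ennreal A * (E n (\<lambda>y. g y * ennreal (w y)) x / E n (\<lambda>y. ennreal (w y)) x)"
      by (rule ennpow_le_of_Ap_bound[OF p, where s = "E n (\<lambda>y. ennreal (w y powr (1/(1-p)))) x"])
        (use elim in \<open>auto simp: h_def\<close>)
    also have "\<dots> \<le> ennreal A * weighted_doob_max w g x"
      unfolding weighted_doob_max_def by (intro mult_left_mono SUP_upper) auto
    finally show ?case by (simp add: g_def)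
  qed
qed

lemma nn_integral_dual_weighted_max_le:
  fixes w :: "'a \<Rightarrow> real" and f :: "'a \<Rightarrow> ennreal"
  assumes [measurable]: "w \<in> borel_measurable M" "f \<in> borel_measurable M"
    and w: "\<And>x. x \<in> space M \<Longrightarrow> 0 < w x" and p: "1 < p"
  shows "(\<integral>\<^sup>+x. ennpow (SUP k. E k f x / E k (\<lambda>y. ennreal (w y powr (1/(1-p)))) x) p *
      ennreal (w x powr (1/(1-p))) \<partial>M) \<le> ennreal (doob_const p) * (\<integral>\<^sup>+x. ennpow (f x) p * ennreal (w x) \<partial>M)"
proof -
  define \<sigma> where "\<sigma> = (\<lambda>y. w y powr (1/(1-p)))"
  have [measurable]: "\<sigma> \<in> borel_measurable M" unfolding \<sigma>_def by measurable
  have \<sigma>: "\<And>x. x \<in> space M \<Longrightarrow> 0 < \<sigma> x" using w by (simp add: \<sigma>_def less_imp_neq[symmetric])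
  have "AE x in M. \<forall>k. E k (\<lambda>y. f y * ennreal (1 / \<sigma> y) * ennreal (\<sigma> y)) x = E k f x"
    unfolding AE_all_countable
  proof
    fix k
    show "AE x in M. E k (\<lambda>y. f y * ennreal (1 / \<sigma> y) * ennreal (\<sigma> y)) x = E k f x"
    proof (rule E_cong)
      show "AE x in M. f x * ennreal (1 / \<sigma> x) * ennreal (\<sigma> x) = f x"
      proof (rule AE_I2)
        fix x assume x: "x \<in> space M"
        have "ennreal (1 / \<sigma> x) * ennreal (\<sigma> x) = 1"
          using \<sigma>[OF x] by (simp add: ennreal_mult[symmetric] del: ennreal_mult)
        then show "f x * ennreal (1 / \<sigma> x) * ennreal (\<sigma> x) = f x" by (simp add: mult.assoc)
      qed
    qed measurable
  qed
  then have "AE x in M. (SUP k. E k f x / E k (\<lambda>y. ennreal (\<sigma> y)) x)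
      = weighted_doob_max \<sigma> (\<lambda>y. f y * ennreal (1 / \<sigma> y)) x"
    by eventually_elim (simp add: weighted_doob_max_def)
  then have "(\<integral>\<^sup>+x. ennpow (SUP k. E k f x / E k (\<lambda>y. ennreal (\<sigma> y)) x) p * ennreal (\<sigma> x) \<partial>M)
      = (\<integral>\<^sup>+x. ennpow (weighted_doob_max \<sigma> (\<lambda>y. f y * ennreal (1 / \<sigma> y)) x) p * ennreal (\<sigma> x) \<partial>M)"
    by (intro nn_integral_cong_AE) (auto elim: eventually_mono)
  also have "\<dots> \<le> ennreal (doob_const p) * (\<integral>\<^sup>+x. ennpow (f x * ennreal (1 / \<sigma> x)) p * ennreal (\<sigma> x) \<partial>M)"
    by (rule weighted_doob_max_nn_integral_le) (use \<sigma> p in auto)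
  also have "(\<integral>\<^sup>+x. ennpow (f x * ennreal (1 / \<sigma> x)) p * ennreal (\<sigma> x) \<partial>M) = (\<integral>\<^sup>+x. ennpow (f x) p * ennreal (w x) \<partial>M)"
  proof (rule nn_integral_cong)
    fix x assume x: "x \<in> space M"
    have "\<sigma> x powr (1 - p) = w x" using w[OF x] p by (simp add: \<sigma>_def powr_powr)
    then show "ennpow (f x * ennreal (1 / \<sigma> x)) p * ennreal (\<sigma> x) = ennpow (f x) p * ennreal (w x)"
      using ennpow_mult_inverse_weight[OF \<sigma>[OF x], of p] p by simp
  qed
  finally show ?thesis by (simp add: \<sigma>_def)
qed

lemma doob_max_ennpow_le_Ap:
  fixes w :: "'a \<Rightarrow> real" and f :: "'a \<Rightarrow> ennreal"
  assumes [measurable]: "w \<in> borel_measurable M" "f \<in> borel_measurable M"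
    and w: "\<And>x. x \<in> space M \<Longrightarrow> 0 < w x" and p: "1 < p" and A: "0 \<le> A"
    and Ap: "\<And>n. AE x in M. E n (\<lambda>y. ennreal (w y)) x *
      ennpow (E n (\<lambda>y. ennreal (w y powr (1/(1-p))))  x) (p-1) \<le> ennreal A"
  defines "H \<equiv> \<lambda>x. SUP k. E k f x / E k (\<lambda>y. ennreal (w y powr (1/(1-p)))) x"
  shows "AE x in M. ennpow (doob_max f x) p \<le> ennreal (A powr (p/(p-1))) *
    ennpow (weighted_doob_max w (\<lambda>y. ennpow (H y) (p - 1) * ennreal (1 / w y)) x) (p/(p-1))"
proof -
  let ?Mg = "weighted_doob_max w (\<lambda>y. ennpow (H y) (p - 1) * ennreal (1 / w y))"
  have "AE x in M. \<forall>n. ennpow (E n f x) (p-1) \<le> ennreal A * ?Mg x"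
    unfolding AE_all_countable H_def using E_ennpow_le_Ap_weighted_doob_max[OF assms(1,2) w p Ap] by blast
  then show ?thesis
  proof eventually_elim
    case (elim x)
    have "doob_max f x \<le> ennpow (ennreal A * ?Mg x) (1/(p-1))"
      unfolding doob_max_def
    proof (rule SUP_least)
      fix n
      have "E n f x = ennpow (ennpow (E n f x) (p-1)) (1/(p-1))"
        using p by (simp add: ennpow_inv)
      also have "\<dots> \<le> ennpow (ennreal A * ?Mg x) (1/(p-1))"
        using elim p by (intro ennpow_mono) auto
      finally show "E n f x \<le> ennpow (ennreal A * ?Mg x) (1/(p-1))" .
    qed
    then have "ennpow (doob_max f x) p \<le> ennpow (ennpow (ennreal A * ?Mg x) (1/(p-1))) p"
      using p by (intro ennpow_mono) auto
    also have "\<dots> = ennreal (A powr (p/(p-1))) * ennpow (?Mg x) (p/(p-1))"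
      using p A by (simp add: ennpow_ennpow ennpow_mult ennpow_ennreal powr_powr mult.commute)
    finally show ?case .
  qed
qed

text \<open>Doob's maximal inequality on \<open>L\<^sup>p(w)\<close>, obtained by applying the weighted Doob
  inequality twice: in \<open>L\<^bsup>p'\<^esup>(w)\<close> to the bound of \<open>doob_max_ennpow_le_Ap\<close>, and in \<open>L\<^sup>p(\<sigma>)\<close>.\<close>

lemma doob_max_nn_integral_le_Ap:
  fixes w :: "'a \<Rightarrow> real" and f :: "'a \<Rightarrow> ennreal"
  assumes [measurable]: "w \<in> borel_measurable M" "f \<in> borel_measurable M"
    and w: "\<And>x. x \<in> space M \<Longrightarrow> 0 < w x" and p: "1 < p" and A: "0 \<le> A"
    and Ap: "\<And>n. AE x in M. E n (\<lambda>y. ennreal (w y)) x *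
      ennpow (E n (\<lambda>y. ennreal (w y powr (1/(1-p))))  x) (p-1) \<le> ennreal A"
  shows "(\<integral>\<^sup>+x. ennpow (doob_max f x) p * ennreal (w x) \<partial>M)
     \<le> ennreal (doob_const p * doob_const (p/(p-1)) * A powr (p/(p-1))) *
       (\<integral>\<^sup>+x. ennpow (f x) p * ennreal (w x) \<partial>M)"
proof -
  define p' where "p' = p/(p-1)"
  have p': "1 < p'" using p by (simp add: p'_def)
  define H where "H = (\<lambda>x. SUP k. E k f x / E k (\<lambda>y. ennreal (w y powr (1/(1-p)))) x)"
  define g where "g = (\<lambda>y. ennpow (H y) (p - 1) * ennreal (1 / w y))"
  have [measurable]: "H \<in> borel_measurable M" "g \<in> borel_measurable M"
    unfolding H_def g_def by measurable
  have "(\<integral>\<^sup>+x. ennpow (doob_max f x) p * ennreal (w x) \<partial>M)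
      \<le> (\<integral>\<^sup>+x. ennreal (A powr p') * (ennpow (weighted_doob_max w g x) p' * ennreal (w x)) \<partial>M)"
    using doob_max_ennpow_le_Ap[OF assms(1,2) w p A Ap] unfolding g_def H_def p'_def
    by (intro nn_integral_mono_AE) (auto elim!: eventually_mono intro: mult_right_mono simp: mult.assoc[symmetric])
  also have "\<dots> = ennreal (A powr p') * (\<integral>\<^sup>+x. ennpow (weighted_doob_max w g x) p' * ennreal (w x) \<partial>M)"
    by (rule nn_integral_cmult) measurable
  also have "(\<integral>\<^sup>+x. ennpow (weighted_doob_max w g x) p' * ennreal (w x) \<partial>M)
      \<le> ennreal (doob_const p') * (\<integral>\<^sup>+x. ennpow (g x) p' * ennreal (w x) \<partial>M)"
    by (rule weighted_doob_max_nn_integral_le) (use w p' in auto)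
  also have "(\<integral>\<^sup>+x. ennpow (g x) p' * ennreal (w x) \<partial>M)
      = (\<integral>\<^sup>+x. ennpow (H x) p * ennreal (w x powr (1/(1-p))) \<partial>M)"
  proof (rule nn_integral_cong)
    fix x assume x: "x \<in> space M"
    have "1 - p' = 1/(1-p)" "(p - 1) * p' = p" using p by (simp_all add: p'_def field_simps)
    then show "ennpow (g x) p' * ennreal (w x) = ennpow (H x) p * ennreal (w x powr (1/(1-p)))"
      unfolding g_def using ennpow_mult_inverse_weight[OF w[OF x], of p'] p p'
      by (simp add: ennpow_ennpow)
  qed
  also have "\<dots> \<le> ennreal (doob_const p) * (\<integral>\<^sup>+x. ennpow (f x) p * ennreal (w x) \<partial>M)"
    unfolding H_def by (rule nn_integral_dual_weighted_max_le[OF assms(1,2) w p])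
  finally show ?thesis
    by (simp add: p'_def mult_ac ennreal_mult' doob_const_pos p less_imp_le mult_right_mono)
qed

end

section \<open>A conditional Minkowski inequality for series\<close>

lemma ratio_powr_mult_powr_le:
  fixes a S \<epsilon> \<delta> r :: real
  assumes "0 \<le> a" "0 < \<delta>" "0 < S + \<epsilon>" "1 \<le> r"
  shows "((a + \<delta>) / (S + \<epsilon>)) powr (1 - r) * a powr r \<le> (S + \<epsilon>) powr (r - 1) * a"
proof (cases "a = 0")
  case True then show ?thesis by simp
next
  case False
  then have a: "0 < a" using assms by simp
  define C where "C = ((a + \<delta>) / (S + \<epsilon>)) powr (1 - r)"
  define D where "D = (a + \<delta>) powr (r - 1)"
  have D: "0 < D" using assms a by (simp add: D_def)
  have CD: "C * D = (S + \<epsilon>) powr (r - 1)"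
  proof -
    have inv: "x powr (1 - r) = 1 / x powr (r - 1)" if "0 < x" for x :: real
      using that powr_minus_divide[of x "r - 1"] by simp
    have "C = (a + \<delta>) powr (1 - r) / (S + \<epsilon>) powr (1 - r)"
      using assms a by (simp add: powr_divide C_def)
    also have "\<dots> = (S + \<epsilon>) powr (r - 1) / D"
      using assms a inv[of "a + \<delta>"] inv[of "S + \<epsilon>"] by (simp add: D_def)
    finally show ?thesis using D by simp
  qed
  have "a powr r = a powr (r - 1) * a"
    using a by (simp add: powr_diff)
  moreover have "a powr (r - 1) \<le> D"
    using assms a unfolding D_def by (intro powr_mono2) auto
  ultimately have "C * a powr r \<le> C * D * a"
    using a by (simp add: C_def mult.assoc mult_left_mono mult_right_mono)
  then show ?thesis using CD by (simp add: C_def)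
qed

lemma sums_enn2real:
  fixes f :: "nat \<Rightarrow> ennreal"
  assumes fin: "(\<Sum>k. f k) < \<top>"
  shows "(\<lambda>k. enn2real (f k)) sums enn2real (\<Sum>k. f k)"
proof -
  have "f k \<le> (\<Sum>k. f k)" for k
    using sum_le_suminf[OF summableI, of "{k}" f] by simp
  then have f_fin: "f k \<noteq> \<top>" for k using fin by (metis le_less_trans less_irrefl)
  have eq: "(\<Sum>k. ennreal (enn2real (f k))) = (\<Sum>k. f k)"
    using f_fin by (intro suminf_cong) (simp add: ennreal_enn2real_if)
  have sm: "summable (\<lambda>k. enn2real (f k))"
    using eq fin by (intro summable_suminf_not_top) auto
  have "(\<Sum>k. ennreal (enn2real (f k))) = ennreal (\<Sum>k. enn2real (f k))"
    by (rule suminf_ennreal2[OF _ sm]) simp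
  moreover have "0 \<le> (\<Sum>k. enn2real (f k))" using sm by (intro suminf_nonneg) auto
  ultimately have "enn2real (\<Sum>k. f k) = (\<Sum>k. enn2real (f k))"
    using eq by (metis enn2real_ennreal)
  then show ?thesis using sm by (simp add: summable_sums_iff)
qed

text \<open>The weights \<open>(a\<^sub>k + \<epsilon> 2\<^bsup>-k-1\<^esup>) / (S + \<epsilon>)\<close> are the positive perturbation of the
  optimal weights \<open>a\<^sub>k / S\<close> in \<open>ennpow_suminf_le_weighted\<close>.\<close>

lemma perturbed_weights_sums:
  fixes a :: "nat \<Rightarrow> real"
  assumes "a sums S" "0 \<le> S" "0 < \<epsilon>"
  shows "(\<lambda>k. (a k + \<epsilon> * (1/2)^Suc k) / (S + \<epsilon>)) sums 1"
proof -
  have "(\<lambda>k. a k + \<epsilon> * (1/2)^Suc k) sums (S + \<epsilon> * 1)"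
    by (intro sums_add sums_mult power_half_series assms)
  then have "(\<lambda>k. (a k + \<epsilon> * (1/2)^Suc k) / (S + \<epsilon>)) sums ((S + \<epsilon> * 1) / (S + \<epsilon>))"
    by (rule sums_divide)
  then show ?thesis using assms by simp
qed

lemma suminf_perturbed_weights_le:
  fixes a :: "nat \<Rightarrow> real"
  assumes r: "1 \<le> r" and a: "\<And>k. 0 \<le> a k" "a sums S" and \<epsilon>: "0 < \<epsilon>"
  shows "(\<Sum>k. ennreal (((a k + \<epsilon> * (1/2)^Suc k) / (S + \<epsilon>)) powr (1 - r)) * ennreal (a k powr r))
    \<le> ennreal ((S + \<epsilon>) powr r)"
proof -
  have S: "0 \<le> S" by (rule sums_le[OF _ sums_zero a(2)]) (rule a(1))
  have "(\<Sum>k. ennreal (((a k + \<epsilon> * (1/2)^Suc k) / (S + \<epsilon>)) powr (1 - r)) * ennreal (a k powr r))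
      \<le> (\<Sum>k. ennreal ((S + \<epsilon>) powr (r - 1) * a k))"
  proof (intro suminf_le)
    fix k
    show "ennreal (((a k + \<epsilon> * (1/2)^Suc k) / (S + \<epsilon>)) powr (1 - r)) * ennreal (a k powr r)
        \<le> ennreal ((S + \<epsilon>) powr (r - 1) * a k)"
      using ratio_powr_mult_powr_le[of "a k" "\<epsilon> * (1/2)^Suc k" S \<epsilon> r] a S \<epsilon> r
      by (simp add: ennreal_mult[symmetric] ennreal_leI del: ennreal_mult)
  qed auto
  also have "\<dots> = ennreal ((S + \<epsilon>) powr (r - 1) * S)"
    by (rule suminf_ennreal_eq) (use a S \<epsilon> in \<open>auto intro: sums_mult\<close>)
  also have "\<dots> \<le> ennreal ((S + \<epsilon>) powr r)"
  proof (rule ennreal_leI)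
    have "(S + \<epsilon>) powr (r - 1) * S \<le> (S + \<epsilon>) powr (r - 1) * (S + \<epsilon>)"
      using \<epsilon> by (intro mult_left_mono) auto
    also have "\<dots> = (S + \<epsilon>) powr r" using \<epsilon> S by (simp add: powr_diff)
    finally show "(S + \<epsilon>) powr (r - 1) * S \<le> (S + \<epsilon>) powr r" .
  qed
  finally show ?thesis .
qed

lemma ennreal_le_powr_of_le_powr_plus_inverse:
  fixes Q :: ennreal
  assumes "\<And>m. Q \<le> ennreal ((a + 1 / Suc m) powr r)" "0 \<le> a" "0 < r"
  shows "Q \<le> ennreal (a powr r)"
proof -
  have "(\<lambda>m. a + 1 / real (Suc m)) \<longlonglongrightarrow> a + 0"
    by (intro tendsto_add tendsto_const LIMSEQ_Suc[OF lim_inverse_n'])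
  then have "(\<lambda>m. (a + 1 / real (Suc m)) powr r) \<longlonglongrightarrow> a powr r"
    using assms by (intro tendsto_powr') (auto intro!: always_eventually)
  then have "(\<lambda>m. ennreal ((a + 1 / real (Suc m)) powr r)) \<longlonglongrightarrow> ennreal (a powr r)"
    by (rule tendsto_ennrealI)
  then show ?thesis by (rule LIMSEQ_le_const) (use assms in auto)
qed

context filtered_space
begin

lemma E_ennpow_suminf_le_weighted:
  fixes v :: "'a \<Rightarrow> real" and u :: "nat \<Rightarrow> 'a \<Rightarrow> ennreal" and c :: "nat \<Rightarrow> 'a \<Rightarrow> real"
  assumes r: "1 \<le> r" and [measurable]: "v \<in> borel_measurable M" "\<And>k. u k \<in> borel_measurable M"
    "\<And>k. c k \<in> borel_measurable (F n)"
    and c: "\<And>k x. 0 < c k x" "\<And>x. (\<lambda>k. c k x) sums 1"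
  shows "AE x in M. E n (\<lambda>y. ennreal (v y) * ennpow (\<Sum>k. u k y) r) x
    \<le> (\<Sum>k. ennreal (c k x powr (1 - r)) * E n (\<lambda>y. ennreal (v y) * ennpow (u k y) r) x)"
proof -
  define d where "d = (\<lambda>k x. ennreal (c k x powr (1 - r)))"
  have [measurable]: "d k \<in> borel_measurable (F n)" for k unfolding d_def by measurable
  then have [measurable]: "d k \<in> borel_measurable M" for k by (rule measurable_F_M)
  have "AE x in M. E n (\<lambda>y. ennreal (v y) * ennpow (\<Sum>k. u k y) r) x
      \<le> E n (\<lambda>y. \<Sum>k. d k y * (ennreal (v y) * ennpow (u k y) r)) x"
  proof (rule E_mono)
    show "AE x in M. ennreal (v x) * ennpow (\<Sum>k. u k x) r \<le> (\<Sum>k. d k x * (ennreal (v x) * ennpow (u k x) r))"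
    proof (rule AE_I2)
      fix x
      have "ennreal (v x) * ennpow (\<Sum>k. u k x) r \<le> ennreal (v x) * (\<Sum>k. d k x * ennpow (u k x) r)"
        unfolding d_def by (intro mult_left_mono ennpow_suminf_le_weighted r c) auto
      then show "ennreal (v x) * ennpow (\<Sum>k. u k x) r \<le> (\<Sum>k. d k x * (ennreal (v x) * ennpow (u k x) r))"
        by (simp add: ennreal_suminf_cmult[symmetric] mult_ac del: ennreal_suminf_cmult)
    qed
  qed measurable
  moreover have "AE x in M. E n (\<lambda>y. \<Sum>k. d k y * (ennreal (v y) * ennpow (u k y) r)) x =
      (\<Sum>k. E n (\<lambda>y. d k y * (ennreal (v y) * ennpow (u k y) r)) x)"
    by (rule E_suminf) measurable
  moreover have "AE x in M. \<forall>k. E n (\<lambda>y. d k y * (ennreal (v y) * ennpow (u k y) r)) x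
      = d k x * E n (\<lambda>y. ennreal (v y) * ennpow (u k y) r) x"
    unfolding AE_all_countable
  proof
    fix k
    show "AE x in M. E n (\<lambda>y. d k y * (ennreal (v y) * ennpow (u k y) r)) x
        = d k x * E n (\<lambda>y. ennreal (v y) * ennpow (u k y) r) x"
      using E_prod[of "d k" n "\<lambda>y. ennreal (v y) * ennpow (u k y) r"] by (auto elim: AE_mp)
  qed
  ultimately show ?thesis by eventually_elim (simp add: d_def)
qed

text \<open>Minkowski's inequality in \<open>L\<^sup>r(v)\<close> conditioned on \<open>F n\<close>, up to \<open>\<epsilon>\<close>: choose
  \<open>F n\<close>-measurable weights proportional to the conditional norms of the terms, perturbed by \<open>\<epsilon>\<close>.\<close>

lemma E_minkowski_suminf_perturbed:
  fixes v :: "'a \<Rightarrow> real" and u :: "nat \<Rightarrow> 'a \<Rightarrow> ennreal" and r \<epsilon> :: real and n :: nat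
  assumes r: "1 \<le> r" and [measurable]: "v \<in> borel_measurable M" "\<And>k. u k \<in> borel_measurable M"
    and \<epsilon>: "0 < \<epsilon>"
  defines "N \<equiv> \<lambda>x. \<Sum>k. ennpow (E n (\<lambda>y. ennreal (v y) * ennpow (u k y) r) x) (1/r)"
  shows "AE x in M. N x < \<top> \<longrightarrow>
    E n (\<lambda>y. ennreal (v y) * ennpow (\<Sum>k. u k y) r) x \<le> ennreal ((enn2real (N x) + \<epsilon>) powr r)"
proof -
  define P where "P = (\<lambda>k. E n (\<lambda>y. ennreal (v y) * ennpow (u k y) r))"
  have [measurable]: "P k \<in> borel_measurable (F n)" for k unfolding P_def by measurable
  have [measurable]: "N \<in> borel_measurable (F n)" unfolding N_def by measurable
  define a where "a = (\<lambda>k x. enn2real (ennpow (P k x) (1/r)))"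
  define c where "c = (\<lambda>k x. if N x < \<top> then (a k x + \<epsilon> * (1/2)^Suc k) / (enn2real (N x) + \<epsilon>)
      else (1/2)^Suc k)"
  have a_sums: "(\<lambda>k. a k x) sums enn2real (N x)" if "N x < \<top>" for x
    unfolding a_def N_def P_def by (rule sums_enn2real) (use that in \<open>simp add: N_def\<close>)
  have c_pos: "0 < c k x" for k x
    using \<epsilon> by (simp add: c_def a_def add_nonneg_pos)
  have c_sums: "(\<lambda>k. c k x) sums 1" for x
  proof (cases "N x < \<top>")
    case True
    then show ?thesis using perturbed_weights_sums[OF a_sums[OF True] _ \<epsilon>] by (simp add: c_def)
  next
    case False
    then show ?thesis using power_half_series by (simp add: c_def)
  qed
  have c_meas: "c k \<in> borel_measurable (F n)" for k unfolding c_def a_def by measurable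
  have "AE x in M. E n (\<lambda>y. ennreal (v y) * ennpow (\<Sum>k. u k y) r) x \<le> (\<Sum>k. ennreal (c k x powr (1 - r)) * P k x)"
    unfolding P_def by (rule E_ennpow_suminf_le_weighted[OF r assms(2,3) c_meas c_pos c_sums])
  then show ?thesis
  proof eventually_elim
    case (elim x)
    show ?case
    proof
      assume fin: "N x < \<top>"
      have P_eq: "P k x = ennreal (a k x powr r)" for k
      proof -
        have "ennpow (P k x) (1/r) \<le> N x"
          unfolding N_def P_def using sum_le_suminf[OF summableI, of "{k}"] by simp
        then have "ennpow (P k x) (1/r) < \<top>" using fin by (rule le_less_trans)
        then show ?thesis
          using r by (simp add: a_def ennpow_ennreal[symmetric] ennpow_ennpow less_top)
      qed
      note elim
      also have "(\<Sum>k. ennreal (c k x powr (1 - r)) * P k x) =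
          (\<Sum>k. ennreal (((a k x + \<epsilon> * (1/2)^Suc k) / (enn2real (N x) + \<epsilon>)) powr (1 - r))
            * ennreal (a k x powr r))"
        using fin by (simp only: P_eq c_def if_True)
      also have "\<dots> \<le> ennreal ((enn2real (N x) + \<epsilon>) powr r)"
        by (rule suminf_perturbed_weights_le[OF r _ a_sums[OF fin] \<epsilon>]) (simp add: a_def)
      finally show "E n (\<lambda>y. ennreal (v y) * ennpow (\<Sum>k. u k y) r) x \<le> ennreal ((enn2real (N x) + \<epsilon>) powr r)" .
    qed
  qed
qed

lemma E_minkowski_suminf:
  fixes v :: "'a \<Rightarrow> real" and u :: "nat \<Rightarrow> 'a \<Rightarrow> ennreal" and r :: real
  assumes r: "1 \<le> r" and [measurable]: "v \<in> borel_measurable M" "\<And>k. u k \<in> borel_measurable M"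
  shows "AE x in M. ennpow (E n (\<lambda>y. ennreal (v y) * ennpow (\<Sum>k. u k y) r) x) (1/r)
      \<le> (\<Sum>k. ennpow (E n (\<lambda>y. ennreal (v y) * ennpow (u k y) r) x) (1/r))"
proof -
  define N where "N = (\<lambda>x. \<Sum>k. ennpow (E n (\<lambda>y. ennreal (v y) * ennpow (u k y) r) x) (1/r))"
  define Q where "Q = E n (\<lambda>y. ennreal (v y) * ennpow (\<Sum>k. u k y) r)"
  have "AE x in M. \<forall>m. N x < \<top> \<longrightarrow> Q x \<le> ennreal ((enn2real (N x) + 1 / real (Suc m)) powr r)"
    unfolding AE_all_countable N_def Q_def by (intro allI E_minkowski_suminf_perturbed r) auto
  then show ?thesis
  proof eventually_elim
    case (elim x)
    show ?case
    proof (cases "N x < \<top>")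
      case False
      then show ?thesis by (simp add: N_def not_less top_unique)
    next
      case True
      have "Q x \<le> ennreal (enn2real (N x) powr r)"
        by (rule ennreal_le_powr_of_le_powr_plus_inverse) (use elim True r in auto)
      then have "ennpow (Q x) (1/r) \<le> ennpow (ennreal (enn2real (N x) powr r)) (1/r)"
        using r by (intro ennpow_mono) auto
      also have "\<dots> = N x"
        using True r by (simp add: ennpow_ennreal powr_powr less_top)
      finally show ?thesis by (simp add: Q_def N_def)
    qed
  qed
qed

end

context filtered_space
begin

definition root_max_op :: "('a \<Rightarrow> real) \<Rightarrow> real \<Rightarrow> ('a \<Rightarrow> ennreal) \<Rightarrow> 'a \<Rightarrow> ennreal" where
  "root_max_op v r u x =
    ennpow (doob_max (\<lambda>y. ennreal (v y) * ennpow (u y) r) x) (1/r) * ennreal (v x powr (- 1/r))"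

lemma borel_measurable_root_max_op[measurable]:
  "v \<in> borel_measurable M \<Longrightarrow> root_max_op v r u \<in> borel_measurable M"
  unfolding root_max_op_def by measurable

lemma root_max_op_suminf_le:
  assumes r: "1 \<le> r" and [measurable]: "v \<in> borel_measurable M" "\<And>k. u k \<in> borel_measurable M"
  shows "AE x in M. root_max_op v r (\<lambda>y. \<Sum>k. u k y) x \<le> (\<Sum>k. root_max_op v r (u k) x)"
proof -
  have r0: "0 < 1/r" using r by simp
  have "AE x in M. \<forall>n. ennpow (E n (\<lambda>y. ennreal (v y) * ennpow (\<Sum>k. u k y) r) x) (1/r)
      \<le> (\<Sum>k. ennpow (E n (\<lambda>y. ennreal (v y) * ennpow (u k y) r) x) (1/r))"
    unfolding AE_all_countable using E_minkowski_suminf[OF r] by auto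
  then show ?thesis
  proof eventually_elim
    case (elim x)
    have "root_max_op v r (\<lambda>y. \<Sum>k. u k y) x
        = (SUP n. ennpow (E n (\<lambda>y. ennreal (v y) * ennpow (\<Sum>k. u k y) r) x) (1/r)) * ennreal (v x powr (- 1/r))"
      unfolding root_max_op_def doob_max_def by (simp add: ennpow_SUP[OF r0])
    also have "\<dots> \<le> (SUP n. (\<Sum>k. ennpow (E n (\<lambda>y. ennreal (v y) * ennpow (u k y) r) x) (1/r)))
        * ennreal (v x powr (- 1/r))"
      by (intro mult_right_mono SUP_mono) (use elim in auto)
    also have "\<dots> \<le> (\<Sum>k. (SUP n. ennpow (E n (\<lambda>y. ennreal (v y) * ennpow (u k y) r) x) (1/r)))
        * ennreal (v x powr (- 1/r))"
      by (intro mult_right_mono SUP_least suminf_le SUP_upper) auto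
    also have "\<dots> = (\<Sum>k. root_max_op v r (u k) x)"
      unfolding root_max_op_def doob_max_def by (simp add: ennpow_SUP[OF r0] ennreal_suminf_multc)
    finally show ?case .
  qed
qed

lemma root_max_op_cmult:
  assumes r: "1 \<le> r" and [measurable]: "v \<in> borel_measurable M" "u \<in> borel_measurable M" and c: "0 \<le> c"
  shows "AE x in M. root_max_op v r (\<lambda>y. ennreal c * u y) x = ennreal c * root_max_op v r u x"
proof -
  have "AE x in M. \<forall>n. E n (\<lambda>y. ennreal (v y) * ennpow (ennreal c * u y) r) x
      = ennreal (c powr r) * E n (\<lambda>y. ennreal (v y) * ennpow (u y) r) x"
    unfolding AE_all_countable
  proof
    fix n
    have "(\<lambda>y. ennreal (v y) * ennpow (ennreal c * u y) r)
        = (\<lambda>y. ennreal (c powr r) * (ennreal (v y) * ennpow (u y) r))"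
      using r c by (auto simp: ennpow_mult ennpow_ennreal mult_ac)
    then show "AE x in M. E n (\<lambda>y. ennreal (v y) * ennpow (ennreal c * u y) r) x
        = ennreal (c powr r) * E n (\<lambda>y. ennreal (v y) * ennpow (u y) r) x"
      using E_cmult[of "\<lambda>y. ennreal (v y) * ennpow (u y) r" n "ennreal (c powr r)"] by simp
  qed
  then show ?thesis
  proof eventually_elim
    case (elim x)
    have r0: "0 < 1/r" using r by simp
    have "root_max_op v r (\<lambda>y. ennreal c * u y) x
        = ennpow (ennreal (c powr r) * doob_max (\<lambda>y. ennreal (v y) * ennpow (u y) r) x) (1/r)
          * ennreal (v x powr (- 1/r))"
      unfolding root_max_op_def doob_max_def by (simp add: elim SUP_mult_left_ennreal)
    also have "\<dots> = ennreal c * root_max_op v r u x"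
      using r c r0 by (simp add: root_max_op_def ennpow_mult ennpow_ennreal powr_powr mult_ac)
    finally show ?case .
  qed
qed

lemma E_le_of_root_max_op_le:
  assumes r: "1 \<le> r" and [measurable]: "v \<in> borel_measurable M" "U \<in> borel_measurable M"
    and v: "\<And>x. x \<in> space M \<Longrightarrow> 0 < v x" and K: "0 \<le> K"
    and bd: "AE x in M. root_max_op v r U x \<le> ennreal K * U x"
  shows "AE x in M. E n (\<lambda>y. ennreal (v y) * ennpow (U y) r) x
    \<le> ennreal (K powr r) * (ennreal (v x) * ennpow (U x) r)"
  using bd AE_space
proof eventually_elim
  case (elim x)
  have v0: "0 < v x" using v elim by simp
  have one: "ennreal (v x powr (- 1/r)) * ennreal (v x powr (1/r)) = 1"
    using v0 by (simp add: ennreal_mult[symmetric] powr_add[symmetric] del: ennreal_mult)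
  have "ennpow (doob_max (\<lambda>y. ennreal (v y) * ennpow (U y) r) x) (1/r)
      = root_max_op v r U x * ennreal (v x powr (1/r))"
    unfolding root_max_op_def mult.assoc one by simp
  also have "\<dots> \<le> ennreal K * U x * ennreal (v x powr (1/r))"
    by (intro mult_right_mono elim) auto
  finally have "ennpow (ennpow (doob_max (\<lambda>y. ennreal (v y) * ennpow (U y) r) x) (1/r)) r
      \<le> ennpow (ennreal K * U x * ennreal (v x powr (1/r))) r"
    using r by (intro ennpow_mono) auto
  then have "doob_max (\<lambda>y. ennreal (v y) * ennpow (U y) r) x
      \<le> ennreal (K powr r) * (ennreal (v x) * ennpow (U x) r)"
    using r K v0 by (simp add: ennpow_ennpow ennpow_mult ennpow_ennreal powr_powr mult_ac)
  then show ?case unfolding doob_max_def by (rule order_trans[rotated]) (rule SUP_upper, simp)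
qed


lemma E_le_of_root_max_op_le_real:
  assumes r: "1 \<le> r" and [measurable]: "v \<in> borel_measurable M" "U \<in> borel_measurable M"
    "Ur \<in> borel_measurable M"
    and v: "\<And>x. x \<in> space M \<Longrightarrow> 0 < v x" and Ur: "\<And>x. 0 < Ur x"
    and U_Ur: "AE x in M. U x = ennreal (Ur x)" and K: "0 \<le> K"
    and bd: "AE x in M. root_max_op v r U x \<le> ennreal K * U x"
  shows "AE x in M. E n (\<lambda>y. ennreal (v y * Ur y powr r)) x
    \<le> ennreal (K powr r) * ennreal (v x * Ur x powr r)"
proof -
  have "AE x in M. E n (\<lambda>y. ennreal (v y) * ennpow (U y) r) x
      \<le> ennreal (K powr r) * (ennreal (v x) * ennpow (U x) r)"
    by (rule E_le_of_root_max_op_le[OF r assms(2,3) v K bd])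
  moreover have Ur_eq: "AE x in M. ennreal (v x * Ur x powr r) = ennreal (v x) * ennpow (U x) r"
    using U_Ur AE_space
  proof eventually_elim
    case (elim x)
    then show ?case using v[of x] Ur[of x] by (simp add: ennpow_ennreal ennreal_mult)
  qed
  moreover have "AE x in M. E n (\<lambda>y. ennreal (v y * Ur y powr r)) x = E n (\<lambda>y. ennreal (v y) * ennpow (U y) r) x"
    by (rule E_cong[OF Ur_eq]) measurable
  ultimately show ?thesis by eventually_elim simp
qed
end

lemma is_weight_of_integrable:
  assumes "integrable M w" "\<And>x. x \<in> space M \<Longrightarrow> 0 < w x"
  shows "is_weight M w"
proof -
  have "esssup M (\<lambda>x. ennreal \<bar>0::real\<bar>) \<le> 0" by (intro esssup_I) auto
  then have e: "esssup M (\<lambda>x. ennreal \<bar>0::real\<bar>) < \<infinity>" by simp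
  show ?thesis unfolding is_weight_def in_L1_plus_Linf_def
    by (intro conjI exI[of _ w] exI[of _ "\<lambda>_. 0::real"]) (use e assms in auto)
qed

context filtered_space
begin

lemma A1_char_le:
  assumes [measurable]: "W \<in> borel_measurable M" and Wpos: "\<And>x. x \<in> space M \<Longrightarrow> 0 < W x"
    and bd: "\<And>n. AE x in M. E n (\<lambda>y. ennreal (W y)) x \<le> ennreal K * ennreal (W x)"
  shows "A1_char M F W \<le> ennreal K"
  unfolding A1_char_def
proof (rule SUP_least)
  fix n
  show "esssup M (\<lambda>x. E n (\<lambda>y. ennreal (W y)) x / ennreal (W x)) \<le> ennreal K"
  proof (rule esssup_I)
    show "AE x in M. E n (\<lambda>y. ennreal (W y)) x / ennreal (W x) \<le> ennreal K"
      using bd[of n] AE_space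
    proof eventually_elim
      case (elim x)
      have w0: "0 < W x" using Wpos elim by simp
      have "E n (\<lambda>y. ennreal (W y)) x / ennreal (W x) \<le> (ennreal K * ennreal (W x)) / ennreal (W x)"
        by (rule divide_right_mono_ennreal) (rule elim(1))
      also have "\<dots> = ennreal K"
      proof -
        have "ennreal (W x) / ennreal (W x) = 1" using w0 by (intro ennreal_divide_self) auto
        then show ?thesis by (metis ennreal_times_divide mult_1_right)
      qed
      finally show ?case .
    qed
  qed measurable
qed

lemma A1_char_mult_F0_le:
  assumes \<theta>_meas: "\<theta> \<in> borel_measurable (F 0)" and [measurable]: "W \<in> borel_measurable M"
    and \<theta>: "\<And>x. 0 < \<theta> x" and W: "\<And>x. x \<in> space M \<Longrightarrow> 0 < W x" and K: "0 \<le> K"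
    and bd: "\<And>n. AE x in M. E n (\<lambda>y. ennreal (W y)) x \<le> ennreal K * ennreal (W x)"
  shows "A1_char M F (\<lambda>x. \<theta> x * W x) \<le> ennreal K"
proof (rule A1_char_le)
  have [measurable]: "\<theta> \<in> borel_measurable M" by (rule measurable_F_M[OF \<theta>_meas])
  show "(\<lambda>x. \<theta> x * W x) \<in> borel_measurable M" by measurable
  show "0 < \<theta> x * W x" if "x \<in> space M" for x using \<theta>[of x] W[OF that] by simp
  show "AE x in M. E n (\<lambda>y. ennreal (\<theta> y * W y)) x \<le> ennreal K * ennreal (\<theta> x * W x)" for n
    by (rule E_mult_F_meas_le[OF measurable_F_mono[OF \<theta>_meas] _ _ W bd K]) (simp_all add: less_imp_le \<theta>)
qed

lemma obtain_positive_nn_integral_ennpow_finite: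
  assumes q: "0 < q"
  obtains u :: "'a \<Rightarrow> ennreal" where "u \<in> borel_measurable M" "\<And>x. 0 < u x"
    "(\<integral>\<^sup>+x. ennpow (u x) q \<partial>M) < \<top>"
proof -
  interpret sigma_finite_measure M by (rule sigma_finite_measure_M)
  obtain h :: "'a \<Rightarrow> real" where [measurable]: "h \<in> borel_measurable M" and h: "\<And>x. 0 < h x"
    and "\<And>x. h x \<le> 1" and h_int: "integrable M h"
    by (rule obtain_positive_integrable_function) blast
  have "(\<integral>\<^sup>+x. ennreal (h x) \<partial>M) < \<top>"
    using integrableD(2)[OF h_int] h by (simp add: abs_of_pos top.not_eq_extremum)
  moreover have "ennpow (ennreal (h x powr (1/q))) q = ennreal (h x)" for x
    using h[of x] q by (simp add: ennpow_ennreal powr_powr)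
  ultimately show ?thesis
  proof (intro that[of "\<lambda>x. ennreal (h x powr (1/q))"])
    show "0 < ennreal (h x powr (1/q))" for x using h[of x] by simp
  qed auto
qed

lemma integrable_F0_factor_mult:
  fixes W :: "'a \<Rightarrow> real" and \<theta> h :: "'a \<Rightarrow> real"
  assumes [measurable]: "W \<in> borel_measurable M" "h \<in> borel_measurable M" "\<theta> \<in> borel_measurable (F 0)"
    and Wpos: "\<And>x. x \<in> space M \<Longrightarrow> 0 < W x" and K: "0 \<le> K"
    and A1: "AE x in M. E 0 (\<lambda>y. ennreal (W y)) x \<le> ennreal K * ennreal (W x)"
    and th0: "\<And>x. 0 \<le> \<theta> x" and hint: "(\<integral>\<^sup>+x. ennreal (h x) \<partial>M) < \<top>" and h0: "\<And>x. 0 \<le> h x"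
    and th: "\<And>x. \<theta> x \<le> h x / (1 + enn2real (E 0 (\<lambda>y. ennreal (W y)) x))"
  shows "integrable M (\<lambda>x. \<theta> x * W x)"
proof (rule integrableI_nonneg)
  have [measurable]: "\<theta> \<in> borel_measurable M" by (rule measurable_F_M[of _ 0]) simp
  show "(\<lambda>x. \<theta> x * W x) \<in> borel_measurable M" by measurable
  show "AE x in M. 0 \<le> \<theta> x * W x" using Wpos th0 by (intro AE_I2 mult_nonneg_nonneg) (auto intro: less_imp_le)
  have "(\<integral>\<^sup>+x. ennreal (\<theta> x * W x) \<partial>M) = (\<integral>\<^sup>+x. ennreal (\<theta> x) * ennreal (W x) \<partial>M)"
    using th0 Wpos by (intro nn_integral_cong) (simp add: ennreal_mult less_imp_le)
  also have "\<dots> = (\<integral>\<^sup>+x. ennreal (\<theta> x) * E 0 (\<lambda>y. ennreal (W y)) x \<partial>M)"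
    by (rule E_intg[symmetric]) auto
  also have "\<dots> \<le> (\<integral>\<^sup>+x. ennreal (h x) \<partial>M)"
  proof (rule nn_integral_mono_AE)
    show "AE x in M. ennreal (\<theta> x) * E 0 (\<lambda>y. ennreal (W y)) x \<le> ennreal (h x)"
      using A1 AE_space
    proof eventually_elim
      case (elim x)
      have "E 0 (\<lambda>y. ennreal (W y)) x < \<top>"
        using elim(1) by (rule le_less_trans) (simp add: ennreal_mult_less_top)
      then obtain e where e: "E 0 (\<lambda>y. ennreal (W y)) x = ennreal e" "0 \<le> e"
        by (metis ennreal_cases top.not_eq_extremum)
      have "\<theta> x * e \<le> h x / (1 + e) * e"
        using th[of x] e by (intro mult_right_mono) auto
      also have "\<dots> \<le> h x" using h0[of x] e by (simp add: field_simps mult_left_mono)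
      finally show ?case using e th0[of x] by (simp add: ennreal_mult[symmetric] ennreal_leI del: ennreal_mult)
    qed
  qed
  finally show "(\<integral>\<^sup>+x. ennreal (\<theta> x * W x) \<partial>M) < \<infinity>" using hint by simp
qed

lemma obtain_F0_integrating_factor:
  fixes W1 W2 :: "'a \<Rightarrow> real" and q K1 K2 :: real
  assumes [measurable]: "W1 \<in> borel_measurable M" "W2 \<in> borel_measurable M"
    and W1pos: "\<And>x. x \<in> space M \<Longrightarrow> 0 < W1 x" and W2pos: "\<And>x. x \<in> space M \<Longrightarrow> 0 < W2 x"
    and q: "0 < q" and K: "0 \<le> K1" "0 \<le> K2"
    and A1: "\<And>n. AE x in M. E n (\<lambda>y. ennreal (W1 y)) x \<le> ennreal K1 * ennreal (W1 x)"
            "\<And>n. AE x in M. E n (\<lambda>y. ennreal (W2 y)) x \<le> ennreal K2 * ennreal (W2 x)"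
  obtains \<theta> :: "'a \<Rightarrow> real" where "\<theta> \<in> borel_measurable (F 0)" "\<And>x. 0 < \<theta> x"
    "integrable M (\<lambda>x. \<theta> x powr q * W1 x)" "integrable M (\<lambda>x. \<theta> x * W2 x)"
proof -
  interpret S0: sigma_finite_subalgebra M "F 0" by (rule sigma_finite_subalgebra_F)
  obtain h :: "'a \<Rightarrow> real" where hm: "h \<in> borel_measurable (restr_to_subalg M (F 0))"
    and hpos: "\<And>x. 0 < h x" and "\<And>x. h x \<le> 1" and hint: "integrable (restr_to_subalg M (F 0)) h"
    by (rule sigma_finite_measure.obtain_positive_integrable_function[OF S0.sigma_fin_subalg]) blast
  have [measurable]: "h \<in> borel_measurable (F 0)" using hm by (simp add: S0.subalg)
  have [measurable]: "h \<in> borel_measurable M" by (rule measurable_F_M[of _ 0]) simp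
  have hint': "(\<integral>\<^sup>+x. ennreal (h x) \<partial>M) < \<top>"
  proof -
    have "(\<integral>\<^sup>+x. ennreal (h x) \<partial>(restr_to_subalg M (F 0))) \<noteq> \<infinity>" using integrableD(2)[OF hint] .
    then show ?thesis by (simp add: nn_integral_subalgebra2[OF S0.subalg] top.not_eq_extremum)
  qed
  define e1 where "e1 = (\<lambda>x. enn2real (E 0 (\<lambda>y. ennreal (W1 y)) x))"
  define e2 where "e2 = (\<lambda>x. enn2real (E 0 (\<lambda>y. ennreal (W2 y)) x))"
  have [measurable]: "e1 \<in> borel_measurable (F 0)" "e2 \<in> borel_measurable (F 0)"
    unfolding e1_def e2_def by measurable
  define \<theta> where "\<theta> = (\<lambda>x. min ((h x / (1 + e1 x)) powr (1/q)) (h x / (1 + e2 x)))"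
  have thmeas[measurable]: "\<theta> \<in> borel_measurable (F 0)" unfolding \<theta>_def by measurable
  have e0: "0 \<le> e1 x" "0 \<le> e2 x" for x by (simp_all add: e1_def e2_def)
  have thpos: "0 < \<theta> x" for x
    using hpos[of x] e0[of x] by (simp add: \<theta>_def add_nonneg_pos)
  show ?thesis
  proof (rule that[OF thmeas thpos])
    show "integrable M (\<lambda>x. \<theta> x * W2 x)"
      by (rule integrable_F0_factor_mult[OF _ _ thmeas W2pos K(2) A1(2) _ hint']) (use thpos hpos in \<open>auto simp: \<theta>_def e2_def less_imp_le\<close>)
    show "integrable M (\<lambda>x. \<theta> x powr q * W1 x)"
    proof (rule integrable_F0_factor_mult[OF _ _ _ W1pos K(1) A1(1) _ hint'])
      show "(\<lambda>x. \<theta> x powr q) \<in> borel_measurable (F 0)" by measurable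
      fix x
      have "\<theta> x powr q \<le> ((h x / (1 + e1 x)) powr (1/q)) powr q"
        using thpos[of x] q by (intro powr_mono2) (auto simp: \<theta>_def)
      also have "\<dots> = h x / (1 + e1 x)"
        using q hpos[of x] e0[of x] by (simp add: powr_powr)
      finally show "\<theta> x powr q \<le> h x / (1 + enn2real (E 0 (\<lambda>y. ennreal (W1 y)) x))" by (simp add: e1_def)
    qed (use hpos in \<open>auto intro: less_imp_le\<close>)
  qed
qed

end

lemma ennreal_suminf_Suc_le: "(\<Sum>n. (f::nat \<Rightarrow> ennreal) (Suc n)) \<le> (\<Sum>n. f n)"
proof -
  have "f sums ((\<Sum>n. f (Suc n)) + f 0)"
    by (rule sums_Suc) (rule summable_sums[OF summableI])
  then have "(\<Sum>n. f n) = (\<Sum>n. f (Suc n)) + f 0" by (rule sums_unique[symmetric])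
  then show ?thesis by simp
qed

lemma AE_suminf_less_top_of_nn_integral_ennpow_le:
  fixes t :: "nat \<Rightarrow> 'a \<Rightarrow> ennreal"
  assumes r: "1 \<le> r" and [measurable]: "\<And>k. t k \<in> borel_measurable M"
    and bd: "\<And>k. (\<integral>\<^sup>+x. ennpow (ennreal (2^k) * t k x) r \<partial>M) \<le> I" and I: "I < \<top>"
  shows "AE x in M. (\<Sum>k. t k x) < \<top>"
proof -
  have half: "(\<Sum>k. ennreal ((1/2)^k)) = ennreal 2"
    by (rule suminf_ennreal_eq) (use geometric_sums[of "1/2::real"] in auto)
  define G where "G = (\<lambda>x. \<Sum>k. ennreal ((1/2)^k) * ennpow (ennreal (2^k) * t k x) r)"
  have [measurable]: "G \<in> borel_measurable M" unfolding G_def by measurable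
  have "(\<integral>\<^sup>+x. G x \<partial>M) = (\<Sum>k. ennreal ((1/2)^k) * (\<integral>\<^sup>+x. ennpow (ennreal (2^k) * t k x) r \<partial>M))"
    unfolding G_def by (subst nn_integral_suminf) (auto simp: nn_integral_cmult)
  also have "\<dots> \<le> (\<Sum>k. ennreal ((1/2)^k) * I)"
    by (intro suminf_le mult_left_mono bd) auto
  also have "\<dots> = ennreal 2 * I" by (simp only: ennreal_suminf_multc half)
  also have "\<dots> < \<top>" using I by (simp add: ennreal_mult_less_top)
  finally have "AE x in M. G x \<noteq> \<top>"
    using nn_integral_noteq_infinite[of G M] by (simp add: top.not_eq_extremum)
  then show ?thesis
  proof eventually_elim
    case (elim x)
    have "(\<Sum>k. t k x) = (\<Sum>k. ennreal ((1/2)^k) * (ennreal (2^k) * t k x))"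
    proof (rule suminf_cong)
      fix k
      have "ennreal ((1/2)^k) * ennreal (2^k) = 1"
        by (simp add: ennreal_mult[symmetric] power_mult_distrib[symmetric] del: ennreal_mult)
      then show "t k x = ennreal ((1/2)^k) * (ennreal (2^k) * t k x)"
        by (simp only: mult.assoc[symmetric]) simp
    qed
    also have "\<dots> \<le> (\<Sum>k. ennreal ((1/2)^k) * (1 + ennpow (ennreal (2^k) * t k x) r))"
      using r by (intro suminf_le mult_left_mono le_one_plus_ennpow) auto
    also have "\<dots> = (\<Sum>k. ennreal ((1/2)^k)) + G x"
      unfolding G_def distrib_left mult_1_right by (rule suminf_add[OF summableI summableI, symmetric])
    also have "\<dots> < \<top>" using elim by (simp add: half top.not_eq_extremum)
    finally show ?case .
  qed
qed

lemma realpow_powr: fixes x r :: real assumes "0 \<le> x" shows "(x ^ k) powr r = (x powr r) ^ k"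
  by (induction k) (simp_all add: powr_mult assms)

text \<open>Exponents of the algorithm: \<open>W2_exp p \<ge> 1\<close> is the least exponent with
  \<open>W2_exp p \<cdot> (p - 1) \<ge> 1\<close>, so that both operators below are sublinear, and
  \<open>rdf_exp p = W1_exp p \<cdot> p' = W2_exp p \<cdot> p\<close> is the common Lebesgue exponent on which they act.\<close>

definition W2_exp :: "real \<Rightarrow> real" where "W2_exp p = max 1 (1 / (p - 1))"
definition W1_exp :: "real \<Rightarrow> real" where "W1_exp p = W2_exp p * (p - 1)"
definition rdf_exp :: "real \<Rightarrow> real" where "rdf_exp p = W2_exp p * p"

definition rdf_const :: "real \<Rightarrow> real" where
  "rdf_const p = 2 powr rdf_exp p * 2 * (doob_const p * doob_const (p / (p - 1)))"

definition factor_const1 :: "real \<Rightarrow> real" where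
  "factor_const1 p = 2 powr W1_exp p * rdf_const p powr (W1_exp p / rdf_exp p)"

definition factor_const2 :: "real \<Rightarrow> real" where
  "factor_const2 p = 2 powr W2_exp p * rdf_const p powr (W2_exp p / rdf_exp p)"

lemma W2_exp_ge_1: "1 \<le> W2_exp p"
  by (simp add: W2_exp_def)

lemma W1_exp_ge_1: assumes "1 < p" shows "1 \<le> W1_exp p"
proof (cases "1 \<le> 1 / (p - 1)")
  case True then show ?thesis using assms by (simp add: W1_exp_def W2_exp_def max_def)
next
  case False
  then have "1 < p - 1" using assms by (simp add: field_simps)
  then show ?thesis using False by (simp add: W1_exp_def W2_exp_def max_def)
qed

lemma rdf_exp_eq: "1 < p \<Longrightarrow> rdf_exp p = W1_exp p * (p / (p - 1))"
  by (simp add: rdf_exp_def W1_exp_def)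

lemma rdf_exp_ge_1: assumes "1 < p" shows "1 \<le> rdf_exp p"
proof -
  have "1 * 1 \<le> W2_exp p * p" using W2_exp_ge_1[of p] assms by (intro mult_mono) auto
  then show ?thesis by (simp add: rdf_exp_def)
qed

lemma rdf_const_pos: "1 < p \<Longrightarrow> 0 < rdf_const p"
  by (simp add: rdf_const_def doob_const_pos)

lemma factor_const_pos: "1 < p \<Longrightarrow> 0 < factor_const1 p" "1 < p \<Longrightarrow> 0 < factor_const2 p"
  using rdf_const_pos[of p] by (simp_all add: factor_const1_def factor_const2_def)

section \<open>The Rubio de Francia algorithm for an \<open>A\<^sub>p\<close> weight\<close>

locale Ap_weight = filtered_space +
  fixes w :: "'a \<Rightarrow> real" and p A :: real
  assumes borel_measurable_w[measurable]: "w \<in> borel_measurable M"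
    and w_pos: "\<And>x. x \<in> space M \<Longrightarrow> 0 < w x"
    and p: "1 < p" and A: "0 < A"
    and Ap: "\<And>n. AE x in M. E n (\<lambda>y. ennreal (w y)) x *
      ennpow (E n (\<lambda>y. ennreal (w y powr (1/(1-p))))  x) (p-1) \<le> ennreal A"
begin

definition "\<sigma> = (\<lambda>y. w y powr (1/(1-p)))"
definition "v1 = (\<lambda>y. w y powr (1/p))"
definition "v2 = (\<lambda>y. w y powr (- 1/p))"

lemma borel_measurable_\<sigma>[measurable]: "\<sigma> \<in> borel_measurable M"
  unfolding \<sigma>_def by measurable

lemma borel_measurable_v1[measurable]: "v1 \<in> borel_measurable M"
  unfolding v1_def by measurable

lemma borel_measurable_v2[measurable]: "v2 \<in> borel_measurable M"
  unfolding v2_def by measurable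

lemma \<sigma>_v1_v2_pos: "x \<in> space M \<Longrightarrow> 0 < \<sigma> x" "x \<in> space M \<Longrightarrow> 0 < v1 x" "x \<in> space M \<Longrightarrow> 0 < v2 x"
  using w_pos[of x] by (simp_all add: \<sigma>_def v1_def v2_def less_imp_neq[symmetric])

lemma Ap_\<sigma>: "AE x in M. E n (\<lambda>y. ennreal (\<sigma> y)) x *
    ennpow (E n (\<lambda>y. ennreal (\<sigma> y powr (1/(1 - p/(p-1)))))  x) (p/(p-1) - 1)
  \<le> ennreal (A powr (1/(p-1)))"
proof -
  have "AE x in M. E n (\<lambda>y. ennreal (\<sigma> y powr (1/(1 - p/(p-1))))) x = E n (\<lambda>y. ennreal (w y)) x"
  proof (rule E_cong)
    show "AE x in M. ennreal (\<sigma> x powr (1/(1 - p/(p-1)))) = ennreal (w x)"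
    proof (rule AE_I2)
      fix x assume x: "x \<in> space M"
      have "1/(1-p) * (1/(1 - p/(p-1))) = 1" using p by (simp add: field_simps)
      then show "ennreal (\<sigma> x powr (1/(1 - p/(p-1)))) = ennreal (w x)"
        using w_pos[OF x] by (simp add: \<sigma>_def powr_powr)
    qed
  qed measurable
  then show ?thesis using Ap[of n]
  proof eventually_elim
    case (elim x)
    have pp: "p/(p-1) - 1 = 1/(p-1)" using p by (simp add: field_simps)
    have "E n (\<lambda>y. ennreal (\<sigma> y)) x * ennpow (E n (\<lambda>y. ennreal (\<sigma> y powr (1/(1 - p/(p-1))))) x) (p/(p-1) - 1)
        = ennpow (E n (\<lambda>y. ennreal (w y)) x * ennpow (E n (\<lambda>y. ennreal (\<sigma> y)) x) (p-1)) (1/(p-1))"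
      using p unfolding elim pp by (simp add: ennpow_mult ennpow_ennpow mult.commute)
    also have "\<dots> \<le> ennpow (ennreal A) (1/(p-1))"
      using p elim by (intro ennpow_mono) (auto simp: \<sigma>_def)
    finally show ?case using A by (simp add: ennpow_ennreal)
  qed
qed

lemma nn_integral_root_max_op_v2_le:
  assumes [measurable]: "u \<in> borel_measurable M"
  shows "(\<integral>\<^sup>+x. ennpow (root_max_op v2 (W2_exp p) u x) (rdf_exp p) \<partial>M)
    \<le> ennreal (doob_const p * doob_const (p/(p-1)) * A powr (p/(p-1))) * (\<integral>\<^sup>+x. ennpow (u x) (rdf_exp p) \<partial>M)"
proof -
  let ?c = "W2_exp p"
  define f where "f = (\<lambda>y. ennreal (v2 y) * ennpow (u y) ?c)"
  have [measurable]: "f \<in> borel_measurable M" unfolding f_def by measurable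
  have c: "1 \<le> ?c" "0 < rdf_exp p" using W2_exp_ge_1 rdf_exp_ge_1[OF p] by auto
  have "(\<integral>\<^sup>+x. ennpow (root_max_op v2 ?c u x) (rdf_exp p) \<partial>M) = (\<integral>\<^sup>+x. ennpow (doob_max f x) p * ennreal (w x) \<partial>M)"
  proof (rule nn_integral_cong)
    fix x assume x: "x \<in> space M"
    have "ennpow (root_max_op v2 ?c u x) (rdf_exp p)
        = ennpow (doob_max f x) ((1/?c) * rdf_exp p) * ennreal ((v2 x powr (- 1/?c)) powr rdf_exp p)"
      unfolding root_max_op_def f_def using c by (simp add: ennpow_mult ennpow_ennpow ennpow_ennreal)
    also have "(1/?c) * rdf_exp p = p" using c by (simp add: rdf_exp_def)
    also have "(v2 x powr (- 1/?c)) powr rdf_exp p = w x"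
      using w_pos[OF x] c p by (simp add: v2_def powr_powr rdf_exp_def)
    finally show "ennpow (root_max_op v2 ?c u x) (rdf_exp p) = ennpow (doob_max f x) p * ennreal (w x)" .
  qed
  also have "\<dots> \<le> ennreal (doob_const p * doob_const (p/(p-1)) * A powr (p/(p-1))) *
      (\<integral>\<^sup>+x. ennpow (f x) p * ennreal (w x) \<partial>M)"
    by (rule doob_max_nn_integral_le_Ap) (use w_pos p A Ap in auto)
  also have "(\<integral>\<^sup>+x. ennpow (f x) p * ennreal (w x) \<partial>M) = (\<integral>\<^sup>+x. ennpow (u x) (rdf_exp p) \<partial>M)"
  proof (rule nn_integral_cong)
    fix x assume x: "x \<in> space M"
    have "v2 x powr p * w x = w x powr (- 1/p * p + 1)"
      using w_pos[OF x] by (simp add: v2_def powr_powr powr_add)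
    also have "- 1/p * p + 1 = 0" using p by simp
    finally have one: "v2 x powr p * w x = 1" using w_pos[OF x] by simp
    have "ennpow (f x) p * ennreal (w x) = ennpow (u x) (?c * p) * ennreal (v2 x powr p * w x)"
      unfolding f_def using c p \<sigma>_v1_v2_pos(3)[OF x] w_pos[OF x]
      by (simp add: ennpow_mult ennpow_ennpow ennpow_ennreal ennreal_mult mult_ac)
    then show "ennpow (f x) p * ennreal (w x) = ennpow (u x) (rdf_exp p)"
      unfolding one by (simp add: rdf_exp_def)
  qed
  finally show ?thesis .
qed

lemma nn_integral_root_max_op_v1_le:
  assumes [measurable]: "u \<in> borel_measurable M"
  shows "(\<integral>\<^sup>+x. ennpow (root_max_op v1 (W1_exp p) u x) (rdf_exp p) \<partial>M)
    \<le> ennreal (doob_const p * doob_const (p/(p-1)) * A powr (p/(p-1))) * (\<integral>\<^sup>+x. ennpow (u x) (rdf_exp p) \<partial>M)"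
proof -
  let ?a = "W1_exp p" and ?p' = "p/(p-1)"
  define f where "f = (\<lambda>y. ennreal (v1 y) * ennpow (u y) ?a)"
  have [measurable]: "f \<in> borel_measurable M" unfolding f_def by measurable
  have a: "1 \<le> ?a" "1 < ?p'" "rdf_exp p = ?a * ?p'" using W1_exp_ge_1[OF p] rdf_exp_eq[OF p] p by auto
  have "(\<integral>\<^sup>+x. ennpow (root_max_op v1 ?a u x) (rdf_exp p) \<partial>M) = (\<integral>\<^sup>+x. ennpow (doob_max f x) ?p' * ennreal (\<sigma> x) \<partial>M)"
  proof (rule nn_integral_cong)
    fix x assume x: "x \<in> space M"
    have "ennpow (root_max_op v1 ?a u x) (rdf_exp p)
        = ennpow (doob_max f x) ((1/?a) * rdf_exp p) * ennreal ((v1 x powr (- 1/?a)) powr rdf_exp p)"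
      unfolding root_max_op_def f_def using a(1) rdf_exp_ge_1[OF p]
      by (simp add: ennpow_mult ennpow_ennpow ennpow_ennreal)
    also have "(1/?a) * rdf_exp p = ?p'" using a by simp
    also have "(v1 x powr (- 1/?a)) powr rdf_exp p = \<sigma> x"
    proof -
      have "1/p * (- 1/?a) * rdf_exp p = 1/(1-p)" using a p by (simp add: field_simps)
      then show ?thesis using w_pos[OF x] by (simp add: v1_def \<sigma>_def powr_powr)
    qed
    finally show "ennpow (root_max_op v1 ?a u x) (rdf_exp p) = ennpow (doob_max f x) ?p' * ennreal (\<sigma> x)" .
  qed
  also have "\<dots> \<le> ennreal (doob_const ?p' * doob_const (?p'/(?p'-1)) * (A powr (1/(p-1))) powr (?p'/(?p'-1))) *
      (\<integral>\<^sup>+x. ennpow (f x) ?p' * ennreal (\<sigma> x) \<partial>M)"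
    by (rule doob_max_nn_integral_le_Ap) (use \<sigma>_v1_v2_pos a A Ap_\<sigma> in auto)
  also have "doob_const ?p' * doob_const (?p'/(?p'-1)) * (A powr (1/(p-1))) powr (?p'/(?p'-1))
      = doob_const p * doob_const ?p' * A powr ?p'"
  proof -
    have "?p'/(?p'-1) = p" using p by (simp add: field_simps)
    then show ?thesis using A p by (simp add: powr_powr)
  qed
  also have "(\<integral>\<^sup>+x. ennpow (f x) ?p' * ennreal (\<sigma> x) \<partial>M) = (\<integral>\<^sup>+x. ennpow (u x) (rdf_exp p) \<partial>M)"
  proof (rule nn_integral_cong)
    fix x assume x: "x \<in> space M"
    have "v1 x powr ?p' * \<sigma> x = w x powr (1/p * ?p' + 1/(1-p))"
      using w_pos[OF x] by (simp add: v1_def \<sigma>_def powr_powr powr_add)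
    also have "1/p * ?p' + 1/(1-p) = 0" using p by (simp add: field_simps)
    finally have one: "v1 x powr ?p' * \<sigma> x = 1" using w_pos[OF x] by simp
    have "ennpow (f x) ?p' * ennreal (\<sigma> x) = ennpow (u x) (?a * ?p') * ennreal (v1 x powr ?p' * \<sigma> x)"
      unfolding f_def using a \<sigma>_v1_v2_pos[OF x]
      by (simp add: ennpow_mult ennpow_ennpow ennpow_ennreal ennreal_mult mult_ac)
    then show "ennpow (f x) ?p' * ennreal (\<sigma> x) = ennpow (u x) (rdf_exp p)"
      unfolding one a(3) by simp
  qed
  finally show ?thesis by (simp add: mult_ac)
qed

definition rdf_op :: "('a \<Rightarrow> ennreal) \<Rightarrow> 'a \<Rightarrow> ennreal" where
  "rdf_op u x = root_max_op v1 (W1_exp p) u x + root_max_op v2 (W2_exp p) u x"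

definition "rdf_bound = rdf_const p * A powr (p/(p-1))"

definition "rdf_ratio = 2 * rdf_bound powr (1 / rdf_exp p)"

definition rdf_sum :: "('a \<Rightarrow> ennreal) \<Rightarrow> 'a \<Rightarrow> ennreal" where
  "rdf_sum u x = (\<Sum>k. ennreal ((1 / rdf_ratio) ^ k) * (rdf_op ^^ k) u x)"

lemma borel_measurable_rdf_op[measurable]: "rdf_op u \<in> borel_measurable M"
  unfolding rdf_op_def by measurable

lemma borel_measurable_rdf_op_iter[measurable]:
  "u \<in> borel_measurable M \<Longrightarrow> (rdf_op ^^ k) u \<in> borel_measurable M"
  by (induction k) simp_all

lemma borel_measurable_rdf_sum[measurable]: "u \<in> borel_measurable M \<Longrightarrow> rdf_sum u \<in> borel_measurable M"
  unfolding rdf_sum_def by measurable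

lemma rdf_bound_pos: "0 < rdf_bound"
  using rdf_const_pos[OF p] A by (simp add: rdf_bound_def)

lemma rdf_ratio_pos: "0 < rdf_ratio"
  using rdf_bound_pos by (simp add: rdf_ratio_def)

lemma nn_integral_rdf_op_le:
  assumes [measurable]: "u \<in> borel_measurable M"
  shows "(\<integral>\<^sup>+x. ennpow (rdf_op u x) (rdf_exp p) \<partial>M) \<le> ennreal rdf_bound * (\<integral>\<^sup>+x. ennpow (u x) (rdf_exp p) \<partial>M)"
proof -
  let ?q = "rdf_exp p" and ?K = "doob_const p * doob_const (p/(p-1)) * A powr (p/(p-1))"
  have q: "0 < ?q" using rdf_exp_ge_1[OF p] by simp
  have "(\<integral>\<^sup>+x. ennpow (rdf_op u x) ?q \<partial>M) \<le>
      (\<integral>\<^sup>+x. ennreal (2 powr ?q) *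
        (ennpow (root_max_op v1 (W1_exp p) u x) ?q + ennpow (root_max_op v2 (W2_exp p) u x) ?q) \<partial>M)"
    unfolding rdf_op_def by (intro nn_integral_mono ennpow_add_le q)
  also have "\<dots> = ennreal (2 powr ?q) * ((\<integral>\<^sup>+x. ennpow (root_max_op v1 (W1_exp p) u x) ?q \<partial>M)
      + (\<integral>\<^sup>+x. ennpow (root_max_op v2 (W2_exp p) u x) ?q \<partial>M))"
    by (simp add: nn_integral_cmult nn_integral_add)
  also have "\<dots> \<le> ennreal (2 powr ?q) * (ennreal ?K * (\<integral>\<^sup>+x. ennpow (u x) ?q \<partial>M) +
      ennreal ?K * (\<integral>\<^sup>+x. ennpow (u x) ?q \<partial>M))"
    by (intro mult_left_mono add_mono nn_integral_root_max_op_v1_le nn_integral_root_max_op_v2_le) auto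
  also have "\<dots> = ennreal (2 powr ?q) * (2 * (ennreal ?K * (\<integral>\<^sup>+x. ennpow (u x) ?q \<partial>M)))"
    by (simp only: mult_2)
  also have "\<dots> = ennreal (2 powr ?q * (2 * ?K)) * (\<integral>\<^sup>+x. ennpow (u x) ?q \<partial>M)"
    using A p doob_const_pos[OF p] doob_const_pos[of "p/(p-1)"] by (simp add: ennreal_mult mult.assoc)
  also have "2 powr ?q * (2 * ?K) = rdf_bound"
    by (simp add: rdf_bound_def rdf_const_def mult_ac)
  finally show ?thesis .
qed

lemma nn_integral_rdf_op_iter_le:
  assumes [measurable]: "u \<in> borel_measurable M"
  shows "(\<integral>\<^sup>+x. ennpow ((rdf_op ^^ k) u x) (rdf_exp p) \<partial>M)
    \<le> ennreal (rdf_bound ^ k) * (\<integral>\<^sup>+x. ennpow (u x) (rdf_exp p) \<partial>M)"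
proof (induction k)
  case (Suc k)
  have "(\<integral>\<^sup>+x. ennpow ((rdf_op ^^ Suc k) u x) (rdf_exp p) \<partial>M)
      \<le> ennreal rdf_bound * (\<integral>\<^sup>+x. ennpow ((rdf_op ^^ k) u x) (rdf_exp p) \<partial>M)"
    by (simp add: nn_integral_rdf_op_le)
  also have "\<dots> \<le> ennreal rdf_bound * (ennreal (rdf_bound ^ k) * (\<integral>\<^sup>+x. ennpow (u x) (rdf_exp p) \<partial>M))"
    by (intro mult_left_mono Suc) auto
  also have "\<dots> = ennreal (rdf_bound ^ Suc k) * (\<integral>\<^sup>+x. ennpow (u x) (rdf_exp p) \<partial>M)"
    using rdf_bound_pos by (simp add: ennreal_mult mult.assoc)
  finally show ?case .
qed simp

lemma le_rdf_sum: "u x \<le> rdf_sum u x"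
  using sum_le_suminf[OF summableI, of "{0}" "\<lambda>k. ennreal ((1 / rdf_ratio) ^ k) * (rdf_op ^^ k) u x"]
  by (simp add: rdf_sum_def)

text \<open>The point of the construction: \<open>rdf_op\<close> is sublinear and the geometric weights absorb
  one application of it.\<close>

lemma rdf_op_rdf_sum_le:
  assumes [measurable]: "u \<in> borel_measurable M"
  shows "AE x in M. rdf_op (rdf_sum u) x \<le> ennreal rdf_ratio * rdf_sum u x"
proof -
  define \<gamma> where "\<gamma> k = (1 / rdf_ratio) ^ k" for k
  have \<gamma>: "0 \<le> \<gamma> k" for k using rdf_ratio_pos by (simp add: \<gamma>_def)
  have "AE x in M. root_max_op v1 (W1_exp p) (rdf_sum u) x
      \<le> (\<Sum>k. root_max_op v1 (W1_exp p) (\<lambda>y. ennreal (\<gamma> k) * (rdf_op ^^ k) u y) x)"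
    unfolding rdf_sum_def \<gamma>_def by (rule root_max_op_suminf_le) (use W1_exp_ge_1[OF p] in auto)
  moreover have "AE x in M. root_max_op v2 (W2_exp p) (rdf_sum u) x
      \<le> (\<Sum>k. root_max_op v2 (W2_exp p) (\<lambda>y. ennreal (\<gamma> k) * (rdf_op ^^ k) u y) x)"
    unfolding rdf_sum_def \<gamma>_def by (rule root_max_op_suminf_le) (use W2_exp_ge_1 in auto)
  moreover have "AE x in M. \<forall>k. root_max_op v1 (W1_exp p) (\<lambda>y. ennreal (\<gamma> k) * (rdf_op ^^ k) u y) x
      = ennreal (\<gamma> k) * root_max_op v1 (W1_exp p) ((rdf_op ^^ k) u) x"
    unfolding AE_all_countable by (intro allI root_max_op_cmult) (use W1_exp_ge_1[OF p] \<gamma> in auto)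
  moreover have "AE x in M. \<forall>k. root_max_op v2 (W2_exp p) (\<lambda>y. ennreal (\<gamma> k) * (rdf_op ^^ k) u y) x
      = ennreal (\<gamma> k) * root_max_op v2 (W2_exp p) ((rdf_op ^^ k) u) x"
    unfolding AE_all_countable by (intro allI root_max_op_cmult) (use W2_exp_ge_1 \<gamma> in auto)
  ultimately show ?thesis
  proof eventually_elim
    case (elim x)
    have "rdf_op (rdf_sum u) x
        = root_max_op v1 (W1_exp p) (rdf_sum u) x + root_max_op v2 (W2_exp p) (rdf_sum u) x"
      by (rule rdf_op_def)
    also have "\<dots> \<le> (\<Sum>k. ennreal (\<gamma> k) * root_max_op v1 (W1_exp p) ((rdf_op ^^ k) u) x)
        + (\<Sum>k. ennreal (\<gamma> k) * root_max_op v2 (W2_exp p) ((rdf_op ^^ k) u) x)"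
      using elim by (intro add_mono) auto
    also have "\<dots> = (\<Sum>k. ennreal (\<gamma> k) * (rdf_op ^^ Suc k) u x)"
      by (subst suminf_add[OF summableI summableI]) (simp add: rdf_op_def distrib_left)
    also have "\<dots> = ennreal rdf_ratio * (\<Sum>k. ennreal (\<gamma> (Suc k)) * (rdf_op ^^ Suc k) u x)"
    proof -
      have e: "ennreal (\<gamma> k) = ennreal rdf_ratio * ennreal (\<gamma> (Suc k))" for k
        using rdf_ratio_pos \<gamma>[of "Suc k"] by (simp add: \<gamma>_def ennreal_mult[symmetric] del: ennreal_mult)
      have "(\<Sum>k. ennreal (\<gamma> k) * (rdf_op ^^ Suc k) u x)
          = (\<Sum>k. ennreal rdf_ratio * (ennreal (\<gamma> (Suc k)) * (rdf_op ^^ Suc k) u x))"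
        by (rule suminf_cong, subst e, simp only: mult.assoc)
      then show ?thesis by (simp only: ennreal_suminf_cmult)
    qed
    also have "\<dots> \<le> ennreal rdf_ratio * rdf_sum u x"
      unfolding rdf_sum_def \<gamma>_def
      by (rule mult_left_mono[OF ennreal_suminf_Suc_le[where f = "\<lambda>k. ennreal ((1 / rdf_ratio) ^ k) * (rdf_op ^^ k) u x"]])
        simp
    finally show ?case .
  qed
qed

lemma rdf_sum_less_top:
  assumes [measurable]: "u \<in> borel_measurable M" and u: "(\<integral>\<^sup>+x. ennpow (u x) (rdf_exp p) \<partial>M) < \<top>"
  shows "AE x in M. rdf_sum u x < \<top>"
proof -
  let ?q = "rdf_exp p"
  define t where "t k x = ennreal ((1 / rdf_ratio) ^ k) * (rdf_op ^^ k) u x" for k x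
  have [measurable]: "t k \<in> borel_measurable M" for k unfolding t_def by measurable
  have q: "0 < ?q" using rdf_exp_ge_1[OF p] by simp
  have "(\<integral>\<^sup>+x. ennpow (ennreal (2^k) * t k x) ?q \<partial>M) \<le> (\<integral>\<^sup>+x. ennpow (u x) ?q \<partial>M)" for k
  proof -
    have "2 ^ k * (1 / rdf_ratio) ^ k = (1 / rdf_bound powr (1 / ?q)) ^ k"
      by (simp add: rdf_ratio_def power_mult_distrib[symmetric])
    then have "(2 ^ k * (1 / rdf_ratio) ^ k) powr ?q = ((1 / rdf_bound powr (1 / ?q)) powr ?q) ^ k"
      by (simp add: realpow_powr)
    also have "(1 / rdf_bound powr (1 / ?q)) powr ?q = 1 / rdf_bound"
      using rdf_bound_pos q by (simp add: powr_divide powr_powr)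
    finally have c: "(2 ^ k * (1 / rdf_ratio) ^ k) powr ?q * rdf_bound ^ k = 1"
      using rdf_bound_pos by (simp add: power_one_over)
    have "ennpow (ennreal (2^k) * t k x) ?q
        = ennreal ((2 ^ k * (1 / rdf_ratio) ^ k) powr ?q) * ennpow ((rdf_op ^^ k) u x) ?q" for x
      unfolding t_def using q rdf_ratio_pos
      by (simp add: mult.assoc[symmetric] ennreal_mult[symmetric] ennpow_mult ennpow_ennreal del: ennreal_mult)
    then have "(\<integral>\<^sup>+x. ennpow (ennreal (2^k) * t k x) ?q \<partial>M)
        = ennreal ((2 ^ k * (1 / rdf_ratio) ^ k) powr ?q) * (\<integral>\<^sup>+x. ennpow ((rdf_op ^^ k) u x) ?q \<partial>M)"
      by (simp add: nn_integral_cmult)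
    also have "\<dots> \<le> ennreal ((2 ^ k * (1 / rdf_ratio) ^ k) powr ?q) *
        (ennreal (rdf_bound ^ k) * (\<integral>\<^sup>+x. ennpow (u x) ?q \<partial>M))"
      by (intro mult_left_mono nn_integral_rdf_op_iter_le) auto
    also have "\<dots> = (\<integral>\<^sup>+x. ennpow (u x) ?q \<partial>M)"
      using c rdf_bound_pos by (simp add: mult.assoc[symmetric] ennreal_mult[symmetric] del: ennreal_mult)
    finally show ?thesis .
  qed
  then have "AE x in M. (\<Sum>k. t k x) < \<top>"
    by (intro AE_suminf_less_top_of_nn_integral_ennpow_le[OF rdf_exp_ge_1[OF p] _ _ u]) auto
  then show ?thesis by (simp add: rdf_sum_def t_def)
qed


lemma rdf_ratio_powr_W1_exp: "rdf_ratio powr W1_exp p = factor_const1 p * A"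
proof -
  have "rdf_ratio powr W1_exp p = 2 powr W1_exp p *
      (rdf_const p powr (1 / rdf_exp p * W1_exp p) * A powr (p/(p-1) * (1 / rdf_exp p) * W1_exp p))"
    using A rdf_const_pos[OF p] by (simp add: rdf_ratio_def rdf_bound_def powr_mult powr_powr)
  also have "p/(p-1) * (1 / rdf_exp p) * W1_exp p = 1"
    using W1_exp_ge_1[OF p] p by (simp add: rdf_exp_eq)
  finally show ?thesis using A by (simp add: factor_const1_def mult.commute)
qed

lemma rdf_ratio_powr_W2_exp: "rdf_ratio powr W2_exp p = factor_const2 p * A powr (1/(p-1))"
proof -
  have "rdf_ratio powr W2_exp p = 2 powr W2_exp p *
      (rdf_const p powr (1 / rdf_exp p * W2_exp p) * A powr (p/(p-1) * (1 / rdf_exp p) * W2_exp p))"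
    using A rdf_const_pos[OF p] by (simp add: rdf_ratio_def rdf_bound_def powr_mult powr_powr)
  also have "p/(p-1) * (1 / rdf_exp p) * W2_exp p = 1/(p-1)"
    using W2_exp_ge_1[of p] p by (simp add: rdf_exp_def field_simps)
  finally show ?thesis using A by (simp add: factor_const2_def mult.commute)
qed

text \<open>With \<open>U = rdf_sum u\<^sub>0\<close> for a positive \<open>u\<^sub>0 \<in> L\<^bsup>rdf_exp p\<^esup>\<close>, the weights
  \<open>W\<^sub>1 = v\<^sub>1 U\<^bsup>W1_exp p\<^esup>\<close> and \<open>W\<^sub>2 = v\<^sub>2 U\<^bsup>W2_exp p\<^esup>\<close> are \<open>A\<^sub>1\<close>, and \<open>W\<^sub>1 W\<^sub>2\<^bsup>1-p\<^esup> = w\<close>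
  because \<open>W1_exp p = W2_exp p \<cdot> (p - 1)\<close> and \<open>v\<^sub>1 v\<^sub>2\<^bsup>1-p\<^esup> = w\<close>.\<close>

lemma rdf_A1_factorization:
  obtains W1 W2 :: "'a \<Rightarrow> real" where
    "W1 \<in> borel_measurable M" "W2 \<in> borel_measurable M"
    "\<And>x. x \<in> space M \<Longrightarrow> 0 < W1 x" "\<And>x. x \<in> space M \<Longrightarrow> 0 < W2 x"
    "\<And>x. x \<in> space M \<Longrightarrow> W1 x * W2 x powr (1-p) = w x"
    "\<And>n. AE x in M. E n (\<lambda>y. ennreal (W1 y)) x \<le> ennreal (factor_const1 p * A) * ennreal (W1 x)"
    "\<And>n. AE x in M. E n (\<lambda>y. ennreal (W2 y)) x \<le> ennreal (factor_const2 p * A powr (1/(p-1))) * ennreal (W2 x)"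
proof -
  obtain u0 where u0_meas[measurable]: "u0 \<in> borel_measurable M" and u0: "\<And>x. 0 < u0 x"
    and I: "(\<integral>\<^sup>+x. ennpow (u0 x) (rdf_exp p) \<partial>M) < \<top>"
    using obtain_positive_nn_integral_ennpow_finite[of "rdf_exp p"] rdf_exp_ge_1[OF p] by auto
  define U where "U = rdf_sum u0"
  have U_meas[measurable]: "U \<in> borel_measurable M" unfolding U_def by measurable
  have U_pos: "0 < U x" for x using u0[of x] le_rdf_sum[of u0 x] by (simp add: U_def)
  define Ur where "Ur = (\<lambda>x. if U x < \<top> then enn2real (U x) else 1)"
  have Ur_meas[measurable]: "Ur \<in> borel_measurable M" unfolding Ur_def by measurable
  have Ur_pos: "0 < Ur x" for x using U_pos[of x] by (auto simp: Ur_def enn2real_positive_iff)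
  have U_Ur: "AE x in M. U x = ennreal (Ur x)"
    using rdf_sum_less_top[OF u0_meas I] by eventually_elim (simp add: Ur_def U_def less_top)
  have A1: "AE x in M. E n (\<lambda>y. ennreal (v y * Ur y powr r)) x
      \<le> ennreal (rdf_ratio powr r) * ennreal (v x * Ur x powr r)"
    if [measurable]: "v \<in> borel_measurable M" and v: "\<And>x. x \<in> space M \<Longrightarrow> 0 < v x" and r: "1 \<le> r"
      and S: "\<And>x. root_max_op v r U x \<le> rdf_op U x" for v r n
  proof (rule E_le_of_root_max_op_le_real[OF r that(1) U_meas Ur_meas v Ur_pos U_Ur less_imp_le[OF rdf_ratio_pos]])
    show "AE x in M. root_max_op v r U x \<le> ennreal rdf_ratio * U x"
      using rdf_op_rdf_sum_le[OF u0_meas] unfolding U_def[symmetric] by eventually_elim (rule order_trans[OF S])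
  qed
  show ?thesis
  proof (rule that[of "\<lambda>x. v1 x * Ur x powr W1_exp p" "\<lambda>x. v2 x * Ur x powr W2_exp p"])
    fix x assume x: "x \<in> space M"
    show "0 < v1 x * Ur x powr W1_exp p" "0 < v2 x * Ur x powr W2_exp p"
      using \<sigma>_v1_v2_pos[OF x] Ur_pos[of x] by simp_all
    have "v1 x * (v2 x) powr (1 - p) = w x"
      using w_pos[OF x] p by (simp add: v1_def v2_def powr_powr powr_add[symmetric] field_simps)
    moreover have "Ur x powr W1_exp p * (Ur x powr W2_exp p) powr (1 - p) = 1"
      using Ur_pos[of x] by (simp add: powr_powr powr_add[symmetric] W1_exp_def algebra_simps)
    ultimately show "v1 x * Ur x powr W1_exp p * (v2 x * Ur x powr W2_exp p) powr (1 - p) = w x"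
      using \<sigma>_v1_v2_pos[OF x] Ur_pos[of x] by (simp add: powr_mult mult_ac)
  next
    fix n
    show "AE x in M. E n (\<lambda>y. ennreal (v1 y * Ur y powr W1_exp p)) x
        \<le> ennreal (factor_const1 p * A) * ennreal (v1 x * Ur x powr W1_exp p)"
      unfolding rdf_ratio_powr_W1_exp[symmetric]
      by (rule A1) (use \<sigma>_v1_v2_pos W1_exp_ge_1[OF p] in \<open>auto simp: rdf_op_def\<close>)
    show "AE x in M. E n (\<lambda>y. ennreal (v2 y * Ur y powr W2_exp p)) x
        \<le> ennreal (factor_const2 p * A powr (1/(p-1))) * ennreal (v2 x * Ur x powr W2_exp p)"
      unfolding rdf_ratio_powr_W2_exp[symmetric]
      by (rule A1) (use \<sigma>_v1_v2_pos W2_exp_ge_1 in \<open>auto simp: rdf_op_def\<close>)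
  qed measurable
qed

lemma Ap_weight_factorization:
  obtains w1 w2 where "is_weight M w1" "is_weight M w2" "\<And>x. x \<in> space M \<Longrightarrow> w x = w1 x * w2 x powr (1 - p)"
    "A1_char M F w1 \<le> ennreal (factor_const1 p * A)"
    "A1_char M F w2 \<le> ennreal (factor_const2 p * A powr (1/(p-1)))"
proof -
  obtain W1 W2 :: "'a \<Rightarrow> real" where W_meas[measurable]: "W1 \<in> borel_measurable M" "W2 \<in> borel_measurable M"
    and W1: "\<And>x. x \<in> space M \<Longrightarrow> 0 < W1 x" and W2: "\<And>x. x \<in> space M \<Longrightarrow> 0 < W2 x"
    and W: "\<And>x. x \<in> space M \<Longrightarrow> W1 x * W2 x powr (1-p) = w x"
    and A1_W1: "\<And>n. AE x in M. E n (\<lambda>y. ennreal (W1 y)) x \<le> ennreal (factor_const1 p * A) * ennreal (W1 x)"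
    and A1_W2: "\<And>n. AE x in M. E n (\<lambda>y. ennreal (W2 y)) x
      \<le> ennreal (factor_const2 p * A powr (1/(p-1))) * ennreal (W2 x)"
    by (rule rdf_A1_factorization) blast
  have K: "0 \<le> factor_const1 p * A" "0 \<le> factor_const2 p * A powr (1/(p-1))"
    using factor_const_pos[OF p] A by simp_all
  obtain \<theta> :: "'a \<Rightarrow> real" where \<theta>[measurable]: "\<theta> \<in> borel_measurable (F 0)" and \<theta>_pos: "\<And>x. 0 < \<theta> x"
    and int1: "integrable M (\<lambda>x. \<theta> x powr (p-1) * W1 x)" and int2: "integrable M (\<lambda>x. \<theta> x * W2 x)"
    by (rule obtain_F0_integrating_factor[OF W_meas W1 W2 _ K A1_W1 A1_W2]) (use p in auto)
  have [measurable]: "\<theta> \<in> borel_measurable M" by (rule measurable_F_M[OF \<theta>])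
  show ?thesis
  proof (rule that[of "\<lambda>x. \<theta> x powr (p-1) * W1 x" "\<lambda>x. \<theta> x * W2 x"])
    show "is_weight M (\<lambda>x. \<theta> x powr (p-1) * W1 x)"
      by (rule is_weight_of_integrable[OF int1]) (use \<theta>_pos W1 in \<open>simp add: less_imp_neq[symmetric]\<close>)
    show "is_weight M (\<lambda>x. \<theta> x * W2 x)"
      by (rule is_weight_of_integrable[OF int2]) (use \<theta>_pos W2 in \<open>simp add: less_imp_neq[symmetric]\<close>)
    have "(\<lambda>x. \<theta> x powr (p-1)) \<in> borel_measurable (F 0)" by measurable
    then show "A1_char M F (\<lambda>x. \<theta> x powr (p-1) * W1 x) \<le> ennreal (factor_const1 p * A)"
      by (rule A1_char_mult_F0_le[OF _ W_meas(1) _ W1 K(1) A1_W1]) (simp add: \<theta>_pos less_imp_neq[symmetric])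
    show "A1_char M F (\<lambda>x. \<theta> x * W2 x) \<le> ennreal (factor_const2 p * A powr (1/(p-1)))"
      by (rule A1_char_mult_F0_le[OF \<theta> W_meas(2) \<theta>_pos W2 K(2) A1_W2])
    fix x assume x: "x \<in> space M"
    have "\<theta> x powr (p-1) * \<theta> x powr (1-p) = 1"
      using \<theta>_pos[of x] by (simp add: powr_add[symmetric])
    then show "w x = \<theta> x powr (p-1) * W1 x * (\<theta> x * W2 x) powr (1 - p)"
      using W[OF x] \<theta>_pos[of x] W2[OF x] by (simp add: powr_mult mult_ac)
  qed
qed

end


context filtered_space
begin


lemma AE_le_Ap_char:
  "AE x in M. E n (\<lambda>y. ennreal (w y)) x * ennpow (E n (\<lambda>y. ennreal (w y powr (1/(1-p))))  x) (p-1)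
    \<le> Ap_char M F p w"
proof -
  have "AE x in M. E n (\<lambda>y. ennreal (w y)) x * ennpow (E n (\<lambda>y. ennreal (w y powr (1/(1-p))))  x) (p-1)
      \<le> esssup M (\<lambda>x. E n (\<lambda>y. ennreal (w y)) x * ennpow (E n (\<lambda>y. ennreal (w y powr (1/(1-p))))  x) (p-1))"
    by (rule esssup_AE)
  moreover have "esssup M (\<lambda>x. E n (\<lambda>y. ennreal (w y)) x * ennpow (E n (\<lambda>y. ennreal (w y powr (1/(1-p))))  x) (p-1))
      \<le> Ap_char M F p w"
    unfolding Ap_char_def by (rule SUP_upper) simp
  ultimately show ?thesis by (auto elim: eventually_mono)
qed

text \<open>If \<open>[w]\<^sub>A\<^sub>p = 0\<close> then \<open>M\<close> is a null measure (the conditional expectations of the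
  positive functions \<open>w\<close> and \<open>w\<^bsup>1/(1-p)\<^esup>\<close> are a.e. positive), and every weight works.\<close>

lemma weight_factorization:
  assumes w: "is_weight M w" and Ap: "Ap_char M F p w < \<infinity>" and p: "1 < p"
  obtains w1 w2 where "is_weight M w1" "is_weight M w2" "AE x in M. w x = w1 x * w2 x powr (1 - p)"
    "A1_char M F w1 \<le> ennreal (factor_const1 p) * Ap_char M F p w"
    "A1_char M F w2 \<le> ennreal (factor_const2 p) * ennpow (Ap_char M F p w) (1 / (p - 1))"
proof -
  have [measurable]: "w \<in> borel_measurable M" and w_pos: "\<And>x. x \<in> space M \<Longrightarrow> 0 < w x"
    using w by (auto simp: is_weight_def)
  obtain A where A_eq: "Ap_char M F p w = ennreal A" "0 \<le> A"
    using Ap by (metis ennreal_cases less_irrefl infinity_ennreal_def)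
  show ?thesis
  proof (cases "A = 0")
    case True
    have "AE x in M. 0 < E 0 (\<lambda>y. ennreal (w y)) x" by (rule E_pos) (use w_pos in auto)
    moreover have "AE x in M. 0 < E 0 (\<lambda>y. ennreal (w y powr (1/(1-p)))) x"
      by (rule E_pos) (use w_pos in \<open>auto simp: less_imp_neq[symmetric]\<close>)
    ultimately have null: "AE x in M. False" using AE_le_Ap_char[of 0 w p] unfolding A_eq True
      by eventually_elim (simp add: zero_less_iff_neq_zero)
    have "A1_char M F w \<le> ennreal 0"
      by (rule A1_char_le) (use w_pos null in \<open>auto elim: eventually_mono\<close>)
    then show ?thesis by (intro that[OF w w]) (use null in \<open>auto elim: eventually_mono\<close>)
  next
    case False
    interpret Ap_weight M F w p A
      by unfold_locales (use w_pos p A_eq False AE_le_Ap_char[of _ w p] in auto)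
    obtain w1 w2 where w1: "is_weight M w1" and w2: "is_weight M w2"
      and w: "\<And>x. x \<in> space M \<Longrightarrow> w x = w1 x * w2 x powr (1 - p)"
      and b1: "A1_char M F w1 \<le> ennreal (factor_const1 p * A)"
      and b2: "A1_char M F w2 \<le> ennreal (factor_const2 p * A powr (1/(p-1)))"
      by (rule Ap_weight_factorization) blast
    show ?thesis
    proof (rule that[OF w1 w2])
      show "AE x in M. w x = w1 x * w2 x powr (1 - p)" by (rule AE_I2) (rule w)
      show "A1_char M F w1 \<le> ennreal (factor_const1 p) * Ap_char M F p w"
        using b1 A_eq factor_const_pos[OF p] by (simp add: ennreal_mult)
      show "A1_char M F w2 \<le> ennreal (factor_const2 p) * ennpow (Ap_char M F p w) (1 / (p - 1))"
        using b2 A_eq factor_const_pos[OF p] by (simp add: ennpow_ennreal ennreal_mult)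
    qed
  qed
qed

end

theorem theoremA1:
  fixes p :: real
  assumes "1 < p"
  shows "\<exists>C>0. \<forall>(M::'a measure) F w.
           mfiltration M F \<and> is_weight M w \<and> Ap_char M F p w < \<infinity> \<longrightarrow>
           (\<exists>w1 w2. is_weight M w1 \<and> is_weight M w2 \<and>
              A1_char M F w1 < \<infinity> \<and> A1_char M F w2 < \<infinity> \<and>
              (AE x in M. w x = w1 x * w2 x powr (1 - p)) \<and>
              A1_char M F w1 \<le> ennreal C * Ap_char M F p w \<and>
              A1_char M F w2 \<le> ennreal C * ennpow (Ap_char M F p w) (1 / (p - 1)))"
proof (intro exI[of _ "max (factor_const1 p) (factor_const2 p)"] conjI allI impI)
  let ?C = "max (factor_const1 p) (factor_const2 p)"
  show "0 < ?C" using factor_const_pos[OF assms] by simp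
  fix M :: "'a measure" and F w
  assume H: "mfiltration M F \<and> is_weight M w \<and> Ap_char M F p w < \<infinity>"
  then interpret filtered_space M F by unfold_locales simp
  obtain w1 w2 where w12: "is_weight M w1" "is_weight M w2" "AE x in M. w x = w1 x * w2 x powr (1 - p)"
    and b1: "A1_char M F w1 \<le> ennreal (factor_const1 p) * Ap_char M F p w"
    and b2: "A1_char M F w2 \<le> ennreal (factor_const2 p) * ennpow (Ap_char M F p w) (1 / (p - 1))"
    using weight_factorization[of w p] H assms by blast
  have "A1_char M F w1 \<le> ennreal ?C * Ap_char M F p w"
    using b1 by (rule order_trans) (intro mult_right_mono ennreal_leI; simp)
  moreover have "A1_char M F w2 \<le> ennreal ?C * ennpow (Ap_char M F p w) (1 / (p - 1))"
    using b2 by (rule order_trans) (intro mult_right_mono ennreal_leI; simp)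
  moreover have "ennreal ?C * Ap_char M F p w < \<infinity>" "ennreal ?C * ennpow (Ap_char M F p w) (1 / (p - 1)) < \<infinity>"
    using H by (simp_all add: ennreal_mult_less_top)
  ultimately show "\<exists>w1 w2. is_weight M w1 \<and> is_weight M w2 \<and>
      A1_char M F w1 < \<infinity> \<and> A1_char M F w2 < \<infinity> \<and>
      (AE x in M. w x = w1 x * w2 x powr (1 - p)) \<and>
      A1_char M F w1 \<le> ennreal ?C * Ap_char M F p w \<and>
      A1_char M F w2 \<le> ennreal ?C * ennpow (Ap_char M F p w) (1 / (p - 1))"
    using w12 by (meson le_less_trans)
qed

end
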